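(* Let $K\ge1$, $N$ and $s$ be integers with $0\le s<N-2$ and $s$ independent of $N$, let $X_0,\dots,X_{K-1}\in\mathbb{R}$, and let $f:\mathbb{R}\to\mathbb{R}$ be continuous. Let $\alpha_i=\cos\frac{(2i+1)\pi}{2K}$, $i=0,\dots,K-1$, and define $$u(z)=\sum_{i=0}^{K-1}\frac{(-1)^i/(z-\alpha_i)}{\sum_{j=0}^{K-1}(-1)^j/(z-\alpha_j)}X_i,$$ (extended continuously by $u(\alpha_i)=X_i$) and $g(z)=f(u(z))$ for $z\in[-1,1]$. Let $\mathcal{F}\subset\{0,\dots,N\}$ with $|\mathcal{F}|=N+1-s$, let $n=N-s$, and let $z_0>z_1>\dots>z_n$ be the points $\{\cos\frac{j\pi}{N}: j\in\mathcal{F}\}$. Define Berrut's interpolant $$r_{\mathcal F}(z)=\sum_{i=0}^{n}\frac{(-1)^i/(z-z_i)}{\sum_{j=0}^n(-1)^j/(z-z_j)}\,g(z_i).$$ Then $$\max_{z\in[-1,1]}|r_{\mathcal F}(z)-g(z)|\le(1+\Lambda_n)\min_{r\in\mathcal{Q}}\max_{z\in[-1,1]}|g(z)-r(z)|,$$ where $\Lambda_n$ is the Lebesgue constant of Berrut's interpolant on $\{z_j\}_{j=0}^n$, which satisfies $\Lambda_n\le\big(\frac{(s+1)(s+3)\pi^2}{4}+1\big)\big(1+\pi^2(s+1)\ln(N-s)\big)$, and $\mathcal{Q}$ is the set of rational functions $r=p/q$ with $p$ a real polynomial of degree at most $n$, $q(z)=L(z)\sum_{j=0}^n\frac{(-1)^j}{z-z_j}$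 where $L(z)=\prod_{k=0}^n(z-z_k)$, and $r(z_j)=g(z_j)$ for $j=0,\dots,n$.
   Context: The Lebesgue constant of Berrut's interpolant on nodes $z_0,\dots,z_n$ is $\Lambda_n=\max_{z\in[-1,1]}\sum_{i=0}^n|\ell_i(z)|$ with $\ell_i(z)=\dfrac{(-1)^i/(z-z_i)}{\sum_{j=0}^n (-1)^j/(z-z_j)}$. (In the paper $X_i$ may be real matrices and $f$ matrix-valued; the scalar statement applies entrywise.) *)

theory Defs
  imports "HOL-Analysis.Analysis" "HOL-Computational_Algebra.Polynomial"
begin

definition berrut_basis :: "(nat \<Rightarrow> real) \<Rightarrow> nat \<Rightarrow> nat \<Rightarrow> real \<Rightarrow> real" where
  "berrut_basis x n i z =
     (if \<exists>k\<le>n. z = x k then (if z = x i then 1 else 0)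
      else ((-1) ^ i / (z - x i)) / (\<Sum>j\<le>n. (-1) ^ j / (z - x j)))"

definition berrut :: "(nat \<Rightarrow> real) \<Rightarrow> nat \<Rightarrow> (nat \<Rightarrow> real) \<Rightarrow> real \<Rightarrow> real" where
  "berrut x n y z = (\<Sum>i\<le>n. berrut_basis x n i z * y i)"

definition lebesgue_const :: "(nat \<Rightarrow> real) \<Rightarrow> nat \<Rightarrow> real" where
  "lebesgue_const x n = Sup ((\<lambda>z. \<Sum>i\<le>n. \<bar>berrut_basis x n i z\<bar>) ` {-1..1})"

text \<open>The denominator q(z) = L(z) * sum_j (-1)^j/(z - x j), written in its
polynomial form sum_j (-1)^j prod_{k<>j} (z - x k), which agrees with the
formula off the nodes and is its continuous extension at the nodes.\<close>
definition berrut_denom :: "(nat \<Rightarrow> real) \<Rightarrow> nat \<Rightarrow> real \<Rightarrow> real" where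
  "berrut_denom x n z = (\<Sum>j\<le>n. (-1) ^ j * (\<Prod>k\<in>{..n} - {j}. (z - x k)))"

end

theory Submission
  imports Defs
begin

text \<open>Since a polynomial of degree at most \<open>n\<close> is determined by its values at the \<open>n + 1\<close>
  nodes and \<open>berrut_denom\<close> does not vanish there, \<open>Q\<close> consists of Berrut's interpolant
  alone; the first inequality then reduces to \<open>0 \<le> \<Lambda>\<^sub>n\<close>, which only needs the suprema
  involved to be finite.

  Write \<open>z = cos phi\<close>; the angles \<open>t i\<close> of the nodes \<open>zs i = cos (t i)\<close> lie in \<open>[0, pi]\<close>
  with consecutive gaps between \<open>u = pi / N\<close> and \<open>(s + 1) u\<close>. Off the nodes the Lebesgue
  function is \<open>\<Sum>i. 1 / \<bar>z - zs i\<bar>\<close> divided by \<open>\<bar>\<Sum>i. (-1)^i / (z - zs i)\<bar>\<close>. Splitting the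
  denominator at \<open>z\<close> gives two alternating sums of decreasing terms, so it is at least the
  difference of the first two terms on one side, and trigonometric estimates bound that
  difference below by a multiple of \<open>1 / (u sin phi)\<close>. In the numerator, the node \<open>m\<close> gaps
  away from \<open>phi\<close> contributes at most \<open>pi / (m u sin phi)\<close>, which produces harmonic sums and
  hence the logarithm. Outside the extreme nodes a separate estimate via \<open>\<Sum>j. 1 / j\<^sup>2\<close>
  applies, and the reflection \<open>phi \<mapsto> pi - phi\<close> reduces every position of \<open>phi\<close> to one of
  these two cases.\<close>

lemma x_cos_le_sin:
  fixes x :: real assumes "0 \<le> x" "x \<le> pi" shows "x * cos x \<le> sin x"
proof -
  have "(\<lambda>y. sin y - y * cos y) 0 \<le> (\<lambda>y. sin y - y * cos y) x"
  proof (rule DERIV_nonneg_imp_nondecreasing[OF assms(1)])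
    fix y assume y: "0 \<le> y" "y \<le> x"
    have "((\<lambda>y. sin y - y * cos y) has_real_derivative y * sin y) (at y)"
      by (auto intro!: derivative_eq_intros)
    moreover have "0 \<le> y * sin y"
      using y assms by (auto intro!: mult_nonneg_nonneg sin_ge_zero)
    ultimately show "\<exists>d. ((\<lambda>y. sin y - y * cos y) has_real_derivative d) (at y) \<and> 0 \<le> d"
      by blast
  qed
  then show ?thesis by simp
qed

lemma mult_sin_le_mult_sin:
  fixes a b :: real assumes "0 < a" "a \<le> b" "b \<le> pi"
  shows "a * sin b \<le> b * sin a"
proof -
  have "(\<lambda>y. sin y / y) b \<le> (\<lambda>y. sin y / y) a"
  proof (rule DERIV_nonpos_imp_nonincreasing[OF assms(2)])
    fix y assume y: "a \<le> y" "y \<le> b"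
    hence "0 < y" using assms by auto
    then have "((\<lambda>y. sin y / y) has_real_derivative (cos y * y - sin y) / (y * y)) (at y)"
      by (auto intro!: derivative_eq_intros simp: power2_eq_square)
    moreover have "(cos y * y - sin y) / (y * y) \<le> 0"
      using x_cos_le_sin[of y] y assms \<open>0 < y\<close>
      by (intro divide_nonpos_nonneg) (auto simp: mult.commute)
    ultimately show "\<exists>d. ((\<lambda>y. sin y / y) has_real_derivative d) (at y) \<and> d \<le> 0"
      by blast
  qed
  then show ?thesis using assms by (simp add: field_simps)
qed

lemma jordan_sin_ge:
  fixes x :: real assumes "0 \<le> x" "x \<le> pi/2" shows "2 * x / pi \<le> sin x"
proof (cases "x = 0")
  case False
  have "x * sin (pi/2) \<le> (pi/2) * sin x"
    using mult_sin_le_mult_sin[of x "pi/2"] assms False by auto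
  then show ?thesis by (simp add: field_simps)
qed simp

lemma jordan_sin_ge_min:
  fixes x :: real assumes "0 \<le> x" "x \<le> pi" shows "2 * min x (pi - x) / pi \<le> sin x"
proof (cases "x \<le> pi/2")
  case True then show ?thesis using jordan_sin_ge[of x] assms
    by (auto simp: min_def divide_right_mono)
next
  case False
  have "2 * (pi - x) / pi \<le> sin (pi - x)" using jordan_sin_ge[of "pi - x"] assms False by auto
  then show ?thesis using False by (simp add: min_def)
qed

lemma sin_half_ge: fixes x :: real assumes "0 \<le> x" "x \<le> pi" shows "x / pi \<le> sin (x/2)"
  using jordan_sin_ge[of "x/2"] assms by auto

lemma one_minus_cos_le: fixes x :: real shows "1 - cos x \<le> x\<^sup>2 / 2"
proof -
  have "1 - cos x = 2 * (sin (x/2))\<^sup>2" using cos_double_sin[of "x/2"] by simp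
  also have "\<dots> \<le> 2 * (x/2)\<^sup>2"
    using abs_sin_x_le_abs_x[of "x/2"] by (simp add: abs_le_square_iff[symmetric])
  finally show ?thesis by (simp add: power2_eq_square)
qed

lemma one_minus_cos_ge:
  fixes x :: real assumes "0 \<le> x" "x \<le> pi" shows "2 * x\<^sup>2 / pi\<^sup>2 \<le> 1 - cos x"
proof -
  have "1 - cos x = 2 * (sin (x/2))\<^sup>2" using cos_double_sin[of "x/2"] by simp
  moreover have "(x/pi)\<^sup>2 \<le> (sin (x/2))\<^sup>2"
    using sin_half_ge[OF assms] assms by (intro power_mono) auto
  ultimately show ?thesis by (simp add: power_divide)
qed

definition alt_sum :: "(nat \<Rightarrow> real) \<Rightarrow> nat \<Rightarrow> real" where
  "alt_sum w m = (\<Sum>i\<le>m. (-1)^i * w i)"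

lemma alt_sum_0 [simp]: "alt_sum w 0 = w 0"
  by (simp add: alt_sum_def)

lemma alt_sum_Suc: "alt_sum w (Suc m) = w 0 - alt_sum (\<lambda>i. w (Suc i)) m"
  unfolding alt_sum_def by (simp only: sum.atMost_Suc_shift) (simp add: sum_negf)

lemma alt_sum_antimono_bounds:
  assumes "\<And>i. i < m \<Longrightarrow> w (Suc i) \<le> w i" "\<And>i. i \<le> m \<Longrightarrow> 0 \<le> w i"
  shows "0 \<le> alt_sum w m \<and> alt_sum w m \<le> w 0 \<and> (0 < m \<longrightarrow> w 0 - w 1 \<le> alt_sum w m)"
  using assms
proof (induction m arbitrary: w)
  case (Suc m)
  have "0 \<le> alt_sum (\<lambda>i. w (Suc i)) m \<and> alt_sum (\<lambda>i. w (Suc i)) m \<le> w 1"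
    using Suc.IH[of "\<lambda>i. w (Suc i)"] Suc.prems by auto
  moreover have "w 1 \<le> w 0" using Suc.prems(1)[of 0] by simp
  ultimately show ?case by (simp add: alt_sum_Suc)
qed simp

lemma alt_sum_antimono_ge:
  assumes "\<And>i. i < m \<Longrightarrow> w (Suc i) \<le> w i" "\<And>i. i \<le> m \<Longrightarrow> 0 \<le> w i"
  shows "w 0 - (if 0 < m then w 1 else 0) \<le> alt_sum w m"
  using alt_sum_antimono_bounds[of m w] assms by auto

lemma strict_antimono_on_atMostD:
  "strict_antimono_on {..n} (x :: nat \<Rightarrow> real) \<Longrightarrow> i < j \<Longrightarrow> j \<le> n \<Longrightarrow> x j < x i"
  by (simp add: monotone_on_def)

lemma strict_antimono_on_atMost_leD:
  "strict_antimono_on {..n} (x :: nat \<Rightarrow> real) \<Longrightarrow> i \<le> j \<Longrightarrow> j \<le> n \<Longrightarrow> x j \<le> x i"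
  by (cases "i = j") (auto simp: le_less dest: strict_antimono_on_atMostD)

lemma strict_antimono_on_atMost_inj:
  "strict_antimono_on {..n} (x :: nat \<Rightarrow> real) \<Longrightarrow> i \<le> n \<Longrightarrow> j \<le> n \<Longrightarrow> x i = x j \<Longrightarrow> i = j"
  by (metis linorder_neqE_nat order.strict_iff_not strict_antimono_on_atMostD)

definition berrut_den_sum :: "(nat \<Rightarrow> real) \<Rightarrow> nat \<Rightarrow> real \<Rightarrow> real" where
  "berrut_den_sum x n z = (\<Sum>i\<le>n. (-1)^i / (z - x i))"

definition inv_dist_sum :: "(nat \<Rightarrow> real) \<Rightarrow> nat \<Rightarrow> real \<Rightarrow> real" where
  "inv_dist_sum x n z = (\<Sum>i\<le>n. 1 / \<bar>z - x i\<bar>)"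

definition lebesgue_fun :: "(nat \<Rightarrow> real) \<Rightarrow> nat \<Rightarrow> real \<Rightarrow> real" where
  "lebesgue_fun x n z = (\<Sum>i\<le>n. \<bar>berrut_basis x n i z\<bar>)"

lemma lebesgue_const_eq_Sup_lebesgue_fun:
  "lebesgue_const x n = Sup (lebesgue_fun x n ` {-1..1})"
  unfolding lebesgue_const_def lebesgue_fun_def by simp

lemma lebesgue_fun_nonneg: "0 \<le> lebesgue_fun x n z"
  unfolding lebesgue_fun_def by (auto intro: sum_nonneg)

lemma lebesgue_fun_off_nodes:
  assumes "\<not> (\<exists>k\<le>n. z = x k)"
  shows "lebesgue_fun x n z = inv_dist_sum x n z / \<bar>berrut_den_sum x n z\<bar>"
proof -
  have "lebesgue_fun x n z = (\<Sum>i\<le>n. (1 / \<bar>z - x i\<bar>) / \<bar>berrut_den_sum x n z\<bar>)"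
    unfolding lebesgue_fun_def berrut_basis_def berrut_den_sum_def using assms
    by (intro sum.cong) (auto simp: abs_divide power_abs abs_mult)
  then show ?thesis by (simp add: inv_dist_sum_def sum_divide_distrib)
qed

lemma lebesgue_fun_at_node:
  assumes "strict_antimono_on {..n} x" "j \<le> n"
  shows "lebesgue_fun x n (x j) = 1"
proof -
  have "lebesgue_fun x n (x j) = (\<Sum>i\<le>n. if i = j then 1 else 0)"
    unfolding lebesgue_fun_def berrut_basis_def
    using assms strict_antimono_on_atMost_inj[OF assms(1)] by (intro sum.cong) auto
  then show ?thesis using assms by simp
qed

lemma abs_berrut_le: "\<bar>berrut x n y z\<bar> \<le> lebesgue_fun x n z * (\<Sum>i\<le>n. \<bar>y i\<bar>)"
proof -
  have "\<bar>berrut x n y z\<bar> \<le> (\<Sum>i\<le>n. \<bar>berrut_basis x n i z\<bar> * \<bar>y i\<bar>)"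
    unfolding berrut_def by (rule order_trans[OF sum_abs]) (simp add: abs_mult)
  also have "\<dots> \<le> (\<Sum>i\<le>n. \<bar>berrut_basis x n i z\<bar> * (\<Sum>j\<le>n. \<bar>y j\<bar>))"
    by (intro sum_mono mult_left_mono) (auto intro: member_le_sum)
  finally show ?thesis by (simp add: lebesgue_fun_def sum_distrib_right)
qed

definition reflect_nodes :: "(nat \<Rightarrow> real) \<Rightarrow> nat \<Rightarrow> nat \<Rightarrow> real" where
  "reflect_nodes x n i = - x (n - i)"

lemma sum_atMost_reflect: "(\<Sum>i\<le>(n::nat). f (n - i)) = (\<Sum>i\<le>n. (f i :: real))"
  by (rule sum.reindex_bij_witness[where i="\<lambda>j. n - j" and j="\<lambda>j. n - j"]) auto

lemma berrut_basis_reflect_nodes: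
  assumes "i \<le> n"
  shows "berrut_basis (reflect_nodes x n) n i (-z) = berrut_basis x n (n - i) z"
proof -
  have node: "(\<exists>k\<le>n. -z = reflect_nodes x n k) \<longleftrightarrow> (\<exists>k\<le>n. z = x k)"
    unfolding reflect_nodes_def by (metis diff_diff_cancel diff_le_self minus_equation_iff)
  show ?thesis
  proof (cases "\<exists>k\<le>n. z = x k")
    case True then show ?thesis using node unfolding berrut_basis_def reflect_nodes_def by auto
  next
    case False
    have swap: "a / (b - c) = - (a / (c - b))" for a b c :: real
      by (metis divide_minus_right minus_diff_eq)
    have sign: "(-1::real)^(n - j) = (-1)^n * (-1)^j" if "j \<le> n" for j
      using that by (metis le_add_diff_inverse2 power_add power_minus1_odd mult.commute
          minus_one_mult_self left_minus_one_mult_self)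
    have den: "(\<Sum>j\<le>n. (-1)^j / (- z - reflect_nodes x n j))
        = - ((-1)^n * (\<Sum>j\<le>n. (-1)^j / (z - x j)))"
    proof -
      have "(\<Sum>j\<le>n. (-1)^j / (- z - reflect_nodes x n j))
          = (\<Sum>j\<le>n. - ((-1)^(n - (n - j)) / (z - x (n - j))))"
        unfolding reflect_nodes_def
        by (intro sum.cong refl) (auto intro: swap)
      also have "\<dots> = (\<Sum>j\<le>n. - ((-1)^(n - j) / (z - x j)))"
        by (rule sum_atMost_reflect[where f="\<lambda>j. - ((-1)^(n - j) / (z - x j))"])
      also have "\<dots> = (\<Sum>j\<le>n. - ((-1)^n * ((-1)^j / (z - x j))))"
        by (intro sum.cong refl) (simp add: sign)
      finally show ?thesis by (simp add: sum_negf sum_distrib_left)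
    qed
    have num: "(-1)^i / (- z - reflect_nodes x n i) = - ((-1)^n * ((-1)^(n-i) / (z - x (n - i))))"
      unfolding reflect_nodes_def using sign[of "n - i"] assms
      by (auto intro: swap)
    show ?thesis using False node unfolding berrut_basis_def by (auto simp add: den num)
  qed
qed

lemma lebesgue_fun_reflect_nodes:
  "lebesgue_fun (reflect_nodes x n) n (-z) = lebesgue_fun x n z"
proof -
  have "lebesgue_fun (reflect_nodes x n) n (-z) = (\<Sum>i\<le>n. \<bar>berrut_basis x n (n - i) z\<bar>)"
    unfolding lebesgue_fun_def by (intro sum.cong) (auto simp: berrut_basis_reflect_nodes)
  also have "\<dots> = lebesgue_fun x n z" unfolding lebesgue_fun_def by (rule sum_atMost_reflect)
  finally show ?thesis .
qed

lemma sum_atMost_split_reverse: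
  fixes f :: "nat \<Rightarrow> real" assumes "k \<le> n"
  shows "(\<Sum>i\<le>n. f i) = (\<Sum>j\<le>k. f (k - j)) + (\<Sum>j<n - k. f (Suc k + j))"
proof -
  have "{..n} = {..k} \<union> {Suc k..n}" using assms by auto
  hence "(\<Sum>i\<le>n. f i) = (\<Sum>i\<le>k. f i) + (\<Sum>i\<in>{Suc k..n}. f i)"
    by (simp add: sum.union_disjoint)
  moreover have "(\<Sum>i\<le>k. f i) = (\<Sum>j\<le>k. f (k - j))"
    by (rule sum_atMost_reflect[symmetric])
  moreover have "(\<Sum>i\<in>{Suc k..n}. f i) = (\<Sum>j<n - k. f (Suc k + j))"
    by (rule sum.reindex_bij_witness[where i="\<lambda>j. Suc k + j" and j="\<lambda>i. i - Suc k"]) auto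
  ultimately show ?thesis by simp
qed

text \<open>Splitting the nodes at a point \<open>z\<close> turns the Berrut denominator into two alternating
  sums of decreasing positive terms, so that it cannot vanish between the nodes.\<close>
lemma berrut_den_sum_split:
  assumes "k \<le> n"
  shows "(-1)^(Suc k) * berrut_den_sum x n z
     = alt_sum (\<lambda>j. 1 / (x (k - j) - z)) k
       + (if k < n then alt_sum (\<lambda>j. 1 / (z - x (Suc k + j))) (n - Suc k) else 0)"
proof -
  have "berrut_den_sum x n z = (\<Sum>j\<le>k. (-1)^(k-j) / (z - x (k - j)))
      + (\<Sum>j<n - k. (-1)^(Suc k + j) / (z - x (Suc k + j)))"
    unfolding berrut_den_sum_def by (rule sum_atMost_split_reverse[OF assms])
  moreover have "(-1)^(Suc k) * (\<Sum>j\<le>k. (-1)^(k-j) / (z - x (k - j)))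
      = alt_sum (\<lambda>j. 1 / (x (k - j) - z)) k"
    unfolding alt_sum_def sum_distrib_left
  proof (rule sum.cong[OF refl])
    fix j assume "j \<in> {..k}"
    then have "Suc k + (k - j) = Suc (2 * (k - j)) + j" by auto
    then have "(-1::real)^(Suc k) * (-1)^(k-j) = - ((-1)^j)"
      by (metis power_add power_mult power_minus1_odd mult_minus_left mult_1 power_one)
    moreover have "(-1)^j / (x (k - j) - z) = - ((-1)^j / (z - x (k - j)))"
      by (metis divide_minus_right minus_diff_eq)
    ultimately show "(-1::real)^(Suc k) * ((-1)^(k-j) / (z - x (k - j)))
        = (-1)^j * (1 / (x (k - j) - z))"
      by (simp add: mult.assoc[symmetric])
  qed
  moreover have "(-1)^(Suc k) * (\<Sum>j<n - k. (-1)^(Suc k + j) / (z - x (Suc k + j)))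
      = (if k < n then alt_sum (\<lambda>j. 1 / (z - x (Suc k + j))) (n - Suc k) else 0)"
  proof (cases "k < n")
    case True
    have "{..<n - k} = {..n - Suc k}" using True by auto
    then show ?thesis using True unfolding alt_sum_def sum_distrib_left
      by (auto intro!: sum.cong simp: power_add field_simps)
  qed (use assms in simp)
  ultimately show ?thesis by (simp add: distrib_left)
qed

lemma abs_berrut_den_sum_ge_between:
  assumes sd: "strict_antimono_on {..n} x"
    and k: "k \<le> n" "z < x k" "k < n \<Longrightarrow> x (Suc k) < z"
  defines "l \<equiv> 1 / (x k - z) - (if 0 < k then 1 / (x (k - 1) - z) else 0)"
    and "r \<equiv> (if k < n then 1 / (z - x (Suc k))
               - (if Suc k < n then 1 / (z - x (Suc (Suc k))) else 0) else 0)"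
  shows "0 \<le> l" "0 \<le> r" "l + r \<le> \<bar>berrut_den_sum x n z\<bar>"
proof -
  define wa where "wa j = 1 / (x (k - j) - z)" for j
  define wb where "wb j = 1 / (z - x (Suc k + j))" for j
  have x_le: "x k \<le> x (k - j)" for j using strict_antimono_on_atMost_leD[OF sd, of "k - j" k] k by simp
  have wa_dec: "wa (Suc j) \<le> wa j" if "j < k" for j
  proof -
    have "x (k - j) < x (k - Suc j)" using strict_antimono_on_atMostD[OF sd] that k by simp
    then show ?thesis unfolding wa_def using x_le[of j] k by (intro divide_left_mono) auto
  qed
  have wa_nonneg: "0 \<le> wa j" for j unfolding wa_def using x_le[of j] k by simp
  have "l = wa 0 - (if 0 < k then wa 1 else 0)" by (simp add: l_def wa_def)
  then have l: "0 \<le> l" "l \<le> alt_sum wa k"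
    using alt_sum_antimono_ge[of k wa] wa_dec wa_nonneg wa_dec[of 0] by auto
  have r: "0 \<le> r \<and> r \<le> (if k < n then alt_sum wb (n - Suc k) else 0)"
  proof (cases "k < n")
    case True
    have x_le': "x (Suc k + j) \<le> x (Suc k)" if "j \<le> n - Suc k" for j
      using strict_antimono_on_atMost_leD[OF sd, of "Suc k" "Suc k + j"] that True by simp
    have wb_dec: "wb (Suc j) \<le> wb j" if "j < n - Suc k" for j
    proof -
      have "x (Suc k + Suc j) < x (Suc k + j)" using strict_antimono_on_atMostD[OF sd] that by simp
      then show ?thesis unfolding wb_def using x_le'[of j] that k(3)[OF True]
        by (intro divide_left_mono) auto
    qed
    have wb_nonneg: "0 \<le> wb j" if "j \<le> n - Suc k" for j
      unfolding wb_def using x_le'[OF that] k(3)[OF True] by simp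
    have "r = wb 0 - (if 0 < n - Suc k then wb 1 else 0)" using True by (simp add: r_def wb_def)
    then show ?thesis
      using alt_sum_antimono_ge[of "n - Suc k" wb] wb_dec wb_nonneg wb_dec[of 0] wb_nonneg[of 0] True
      by auto
  qed (simp add: r_def)
  have "\<bar>berrut_den_sum x n z\<bar> = \<bar>(-1)^(Suc k) * berrut_den_sum x n z\<bar>" by (simp add: abs_mult)
  also have "\<dots> = alt_sum wa k + (if k < n then alt_sum wb (n - Suc k) else 0)"
    using berrut_den_sum_split[OF k(1), of x z] l r unfolding wa_def wb_def by auto
  finally show "0 \<le> l" "0 \<le> r" "l + r \<le> \<bar>berrut_den_sum x n z\<bar>" using l r by auto
qed

lemma abs_berrut_den_sum_ge_above:
  assumes sd: "strict_antimono_on {..n} x" and z: "x 0 < z"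
  shows "1 / (z - x 0) - (if 0 < n then 1 / (z - x 1) else 0) \<le> \<bar>berrut_den_sum x n z\<bar>"
proof -
  define v where "v = (\<lambda>j. 1 / (z - x j))"
  have x_le: "x j \<le> x 0" if "j \<le> n" for j using strict_antimono_on_atMost_leD[OF sd, of 0 j] that by simp
  have v_dec: "v (Suc j) \<le> v j" if "j < n" for j
    unfolding v_def using x_le[of j] z strict_antimono_on_atMostD[OF sd, of j "Suc j"] that
    by (intro divide_left_mono) auto
  have v_nonneg: "0 \<le> v j" if "j \<le> n" for j unfolding v_def using x_le[OF that] z by simp
  have "berrut_den_sum x n z = alt_sum v n"
    unfolding berrut_den_sum_def alt_sum_def v_def by (auto intro!: sum.cong)
  moreover have "1 / (z - x 0) - (if 0 < n then 1 / (z - x 1) else 0) \<le> alt_sum v n"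
    using alt_sum_antimono_ge[of n v, OF v_dec v_nonneg] unfolding v_def by simp
  ultimately show ?thesis using abs_ge_self[of "alt_sum v n"] by linarith
qed

lemma obtain_node_interval:
  fixes x :: "nat \<Rightarrow> real"
  assumes "z < x 0" "\<not> (\<exists>k\<le>n. z = x k)"
  obtains k where "k \<le> n" "z < x k" "k < n \<Longrightarrow> x (Suc k) < z"
proof -
  define k where "k = Max {i. i \<le> n \<and> z < x i}"
  have "k \<in> {i. i \<le> n \<and> z < x i}"
    unfolding k_def using assms(1) by (intro Max_in) auto
  then have k: "k \<le> n" "z < x k" by auto
  have "x (Suc k) < z" if "k < n"
  proof -
    have "\<not> z < x (Suc k)"
    proof
      assume "z < x (Suc k)"
      with that have "Suc k \<le> k" unfolding k_def by (intro Max_ge) auto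
      then show False by simp
    qed
    then have "x (Suc k) \<le> z" by simp
    moreover have "x (Suc k) \<noteq> z" using assms(2) that by (metis Suc_leI)
    ultimately show ?thesis by auto
  qed
  then show ?thesis using that k by auto
qed

lemma inverse_diff_ge:
  fixes a b h :: real
  assumes "0 < a" "P \<Longrightarrow> a + h \<le> b \<and> b \<le> 2" "0 \<le> h" "h \<le> 2"
  shows "h / 2 * (1 / a) \<le> 1 / a - (if P then 1 / b else 0)"
proof (cases P)
  case True
  then have b: "a + h \<le> b" "b \<le> 2" using assms(2) by auto
  have "h / 2 * (1 / a) \<le> (b - a) / (a * 2)" using b assms(1) by (simp add: field_simps)
  also have "\<dots> \<le> (b - a) / (a * b)"
    using b assms by (auto intro!: divide_left_mono mult_left_mono)
  also have "\<dots> = 1 / a - 1 / b" using b assms by (simp add: field_simps)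
  finally show ?thesis using True by simp
qed (use assms in \<open>simp add: field_simps\<close>)

lemma lebesgue_fun_le_of_bounds:
  assumes "\<not> (\<exists>k\<le>n. z = x k)" "\<And>i. i \<le> n \<Longrightarrow> 1 / \<bar>z - x i\<bar> \<le> M"
    and "c * M \<le> \<bar>berrut_den_sum x n z\<bar>" "0 < c" "0 < M"
  shows "lebesgue_fun x n z \<le> (real n + 1) / c"
proof -
  have "inv_dist_sum x n z \<le> (real n + 1) * M"
    using sum_mono[of "{..n}" "\<lambda>i. 1 / \<bar>z - x i\<bar>" "\<lambda>_. M"] assms(2)
    by (simp add: inv_dist_sum_def add.commute)
  then have "lebesgue_fun x n z \<le> ((real n + 1) * M) / (c * M)"
    unfolding lebesgue_fun_off_nodes[OF assms(1)] using assms(3-5) by (intro frac_le) auto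
  then show ?thesis using assms(5) by simp
qed

lemma lebesgue_fun_le_min_gap_above:
  assumes sd: "strict_antimono_on {..n} x" and rng: "\<And>i. i \<le> n \<Longrightarrow> \<bar>x i\<bar> \<le> 1"
    and h: "0 < h" "h \<le> 2" and gap: "\<And>i. i < n \<Longrightarrow> h \<le> x i - x (Suc i)"
    and z: "z \<le> 1" "x 0 < z"
  shows "lebesgue_fun x n z \<le> 2 * (real n + 1) / h"
proof -
  have x_le: "x i \<le> x 0" if "i \<le> n" for i using strict_antimono_on_atMost_leD[OF sd, of 0 i] that by simp
  then have off: "\<not> (\<exists>k\<le>n. z = x k)" using z by force
  have "h / 2 * (1 / (z - x 0)) \<le> 1 / (z - x 0) - (if 0 < n then 1 / (z - x 1) else 0)"
    using z gap[of 0] rng[of 1] h by (intro inverse_diff_ge) auto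
  also have "\<dots> \<le> \<bar>berrut_den_sum x n z\<bar>" by (rule abs_berrut_den_sum_ge_above[OF sd z(2)])
  finally have den: "h / 2 * (1 / (z - x 0)) \<le> \<bar>berrut_den_sum x n z\<bar>" .
  have "1 / \<bar>z - x i\<bar> \<le> 1 / (z - x 0)" if "i \<le> n" for i
    using x_le[OF that] z by (auto intro!: divide_left_mono)
  from lebesgue_fun_le_of_bounds[OF off this den] show ?thesis
    using z h by (simp add: algebra_simps)
qed

lemma lebesgue_fun_le_min_gap_below:
  assumes sd: "strict_antimono_on {..n} x" and rng: "\<And>i. i \<le> n \<Longrightarrow> \<bar>x i\<bar> \<le> 1"
    and h: "0 < h" "h \<le> 2" and gap: "\<And>i. i < n \<Longrightarrow> h \<le> x i - x (Suc i)"
    and z: "-1 \<le> z" "z < x 0" and off: "\<not> (\<exists>k\<le>n. z = x k)"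
  shows "lebesgue_fun x n z \<le> 2 * (real n + 1) / h"
proof -
  obtain k where k: "k \<le> n" "z < x k" "k < n \<Longrightarrow> x (Suc k) < z"
    using obtain_node_interval[OF z(2) off] by blast
  define b where "b = 1 / (x k - z)"
  define a where "a = (if k < n then 1 / (z - x (Suc k)) else 0)"
  have "h \<le> x (k - 1) - x k \<and> \<bar>x (k - 1)\<bar> \<le> 1" if "0 < k"
    using k that gap[of "k - 1"] rng[of "k - 1"] by simp
  then have "h / 2 * b \<le> 1 / (x k - z) - (if 0 < k then 1 / (x (k - 1) - z) else 0)"
    unfolding b_def using k z h by (intro inverse_diff_ge) auto
  moreover have "h / 2 * a \<le> (if k < n then 1 / (z - x (Suc k))
             - (if Suc k < n then 1 / (z - x (Suc (Suc k))) else 0) else 0)"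
  proof (cases "k < n")
    case True
    have "h \<le> x (Suc k) - x (Suc (Suc k)) \<and> \<bar>x (Suc (Suc k))\<bar> \<le> 1" if "Suc k < n"
      using that gap[of "Suc k"] rng[of "Suc (Suc k)"] by simp
    then have "h / 2 * (1 / (z - x (Suc k))) \<le> 1 / (z - x (Suc k))
        - (if Suc k < n then 1 / (z - x (Suc (Suc k))) else 0)"
      using k True z h rng[of 0] by (intro inverse_diff_ge) auto
    then show ?thesis using True by (simp add: a_def)
  qed (simp add: a_def)
  ultimately have den: "h / 2 * max a b \<le> \<bar>berrut_den_sum x n z\<bar>"
    using abs_berrut_den_sum_ge_between[OF sd k] by (auto simp: max_def)
  have bound: "1 / \<bar>z - x i\<bar> \<le> max a b" if "i \<le> n" for i
  proof (cases "i \<le> k")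
    case True
    then have "x k \<le> x i" using strict_antimono_on_atMost_leD[OF sd] k by auto
    then show ?thesis unfolding b_def using k by (auto intro!: divide_left_mono max.coboundedI2)
  next
    case False
    then have "x i \<le> x (Suc k)" "k < n" using strict_antimono_on_atMost_leD[OF sd] that by auto
    then show ?thesis unfolding a_def using k by (auto intro!: divide_left_mono max.coboundedI1)
  qed
  have "0 < max a b" using k by (simp add: b_def max.strict_coboundedI2)
  from lebesgue_fun_le_of_bounds[OF off bound den] show ?thesis
    using h \<open>0 < max a b\<close> by (simp add: algebra_simps)
qed

text \<open>Crude, but valid for any nodes in \<open>[-1, 1]\<close>; it shows that the inner interpolant \<open>u\<close>
  of the theorem is bounded.\<close>
lemma lebesgue_fun_le_min_gap:
  assumes sd: "strict_antimono_on {..n} x" and rng: "\<And>i. i \<le> n \<Longrightarrow> \<bar>x i\<bar> \<le> 1"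
    and h: "0 < h" "h \<le> 2" and gap: "\<And>i. i < n \<Longrightarrow> h \<le> x i - x (Suc i)"
    and z: "\<bar>z\<bar> \<le> 1"
  shows "lebesgue_fun x n z \<le> 2 * (real n + 1) / h"
proof -
  consider "\<exists>k\<le>n. z = x k" | "x 0 < z" | "z < x 0" "\<not> (\<exists>k\<le>n. z = x k)" by force
  then show ?thesis
  proof cases
    case 1
    then show ?thesis using lebesgue_fun_at_node[OF sd] h by (auto simp: field_simps)
  next
    case 2
    then show ?thesis using lebesgue_fun_le_min_gap_above[OF sd rng h gap] z by simp
  next
    case 3
    then show ?thesis using lebesgue_fun_le_min_gap_below[OF sd rng h gap] z by simp
  qed
qed

definition berrut_numer :: "(nat \<Rightarrow> real) \<Rightarrow> nat \<Rightarrow> (nat \<Rightarrow> real) \<Rightarrow> real poly" where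
  "berrut_numer x n y = (\<Sum>i\<le>n. smult ((-1)^i * y i) (\<Prod>k\<in>{..n} - {i}. [:- x k, 1:]))"

lemma poly_berrut_numer: "poly (berrut_numer x n y) z = (\<Sum>i\<le>n. (-1)^i * y i * (\<Prod>k\<in>{..n} - {i}. (z - x k)))"
  unfolding berrut_numer_def by (simp add: poly_sum poly_prod)

lemma degree_berrut_numer: "degree (berrut_numer x n y) \<le> n"
  unfolding berrut_numer_def
proof (rule degree_sum_le)
  fix i assume i: "i \<in> {..n}"
  have "degree (\<Prod>k\<in>{..n} - {i}. [:- x k, 1:]) \<le> (\<Sum>k\<in>{..n} - {i}. (degree \<circ> (\<lambda>k. [:- x k, 1:])) k)"
    by (rule degree_prod_sum_le) simp
  also have "\<dots> = card ({..n} - {i})" by simp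
  also have "\<dots> = n" using i by simp
  finally show "degree (smult ((-1)^i * y i) (\<Prod>k\<in>{..n} - {i}. [:- x k, 1:])) \<le> n"
    using degree_smult_le order_trans by blast
qed simp

lemma prod_diff_node_eq_0:
  fixes x :: "nat \<Rightarrow> real"
  assumes "j \<le> n" "i \<le> n" "i \<noteq> j"
  shows "(\<Prod>k\<in>{..n} - {i}. (x j - x k)) = (0::real)"
  using assms by (intro prod_zero) auto

lemma prod_diff_node_nonzero:
  fixes x :: "nat \<Rightarrow> real"
  assumes "strict_antimono_on {..n} x" "j \<le> n"
  shows "(\<Prod>k\<in>{..n} - {j}. (x j - x k)) \<noteq> (0::real)"
  using assms strict_antimono_on_atMost_inj[OF assms(1)] by (auto simp: prod_zero_iff)

lemma poly_berrut_numer_at_node: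
  assumes "j \<le> n"
  shows "poly (berrut_numer x n y) (x j) = (-1)^j * y j * (\<Prod>k\<in>{..n} - {j}. (x j - x k))"
proof -
  have "poly (berrut_numer x n y) (x j) = (\<Sum>i\<le>n. if i = j then (-1)^j * y j * (\<Prod>k\<in>{..n} - {j}. (x j - x k)) else 0)"
    unfolding poly_berrut_numer using prod_diff_node_eq_0[OF assms] by (intro sum.cong) auto
  also have "\<dots> = (-1)^j * y j * (\<Prod>k\<in>{..n} - {j}. (x j - x k))" using assms by simp
  finally show ?thesis .
qed

lemma berrut_denom_at_node:
  assumes "j \<le> n"
  shows "berrut_denom x n (x j) = (-1)^j * (\<Prod>k\<in>{..n} - {j}. (x j - x k))"
proof -
  have "berrut_denom x n (x j) = (\<Sum>i\<le>n. if i = j then (-1)^j * (\<Prod>k\<in>{..n} - {j}. (x j - x k)) else 0)"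
    unfolding berrut_denom_def using prod_diff_node_eq_0[OF assms] by (intro sum.cong) auto
  also have "\<dots> = (-1)^j * (\<Prod>k\<in>{..n} - {j}. (x j - x k))" using assms by simp
  finally show ?thesis .
qed

lemma berrut_denom_at_node_nonzero: "strict_antimono_on {..n} x \<Longrightarrow> j \<le> n \<Longrightarrow> berrut_denom x n (x j) \<noteq> 0"
  using berrut_denom_at_node[of j n x] prod_diff_node_nonzero[of n x j] by simp

lemma berrut_numer_ratio_at_node:
  assumes "strict_antimono_on {..n} x" "j \<le> n"
  shows "poly (berrut_numer x n y) (x j) / berrut_denom x n (x j) = y j"
  using poly_berrut_numer_at_node[OF assms(2)] berrut_denom_at_node[OF assms(2)] prod_diff_node_nonzero[OF assms] by simp

lemma berrut_numer_unique:
  assumes sd: "strict_antimono_on {..n} x" and deg: "degree p \<le> n"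
    and eq: "\<And>j. j \<le> n \<Longrightarrow> poly p (x j) = poly (berrut_numer x n y) (x j)"
  shows "p = berrut_numer x n y"
proof (rule poly_eqI_degree[of "x ` {..n}"])
  have "inj_on x {..n}" unfolding inj_on_def using strict_antimono_on_atMost_inj[OF sd] by auto
  then have "card (x ` {..n}) = n + 1" by (simp add: card_image)
  then show "degree p < card (x ` {..n})" "degree (berrut_numer x n y) < card (x ` {..n})"
    using deg degree_berrut_numer[of x n y] by auto
qed (use eq in auto)

lemma berrut_at_node:
  assumes "strict_antimono_on {..n} x" "j \<le> n"
  shows "berrut x n y (x j) = y j"
proof -
  have "berrut x n y (x j) = (\<Sum>i\<le>n. if i = j then y j else 0)"
    unfolding berrut_def berrut_basis_def using assms strict_antimono_on_atMost_inj[OF assms(1)]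
    by (intro sum.cong) auto
  then show ?thesis using assms by simp
qed

lemma berrut_eq_ratio_off_nodes:
  assumes nn: "\<not> (\<exists>k\<le>n. z = x k)"
  shows "berrut x n y z = poly (berrut_numer x n y) z / berrut_denom x n z"
proof -
  define L where "L = (\<Prod>k\<le>n. (z - x k))"
  have nz: "\<And>k. k \<le> n \<Longrightarrow> z - x k \<noteq> 0" using nn by auto
  have L0: "L \<noteq> 0" unfolding L_def using nz by (auto simp: prod_zero_iff)
  have rem: "\<And>i. i \<le> n \<Longrightarrow> (\<Prod>k\<in>{..n} - {i}. (z - x k)) = L / (z - x i)"
  proof -
    fix i assume i: "i \<le> n"
    have "L = (z - x i) * (\<Prod>k\<in>{..n} - {i}. (z - x k))" unfolding L_def using i
      by (intro prod.remove) auto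
    then show "(\<Prod>k\<in>{..n} - {i}. (z - x k)) = L / (z - x i)" using nz[OF i] by (simp add: field_simps)
  qed
  have pP: "poly (berrut_numer x n y) z = L * (\<Sum>i\<le>n. (-1)^i * y i / (z - x i))"
    unfolding poly_berrut_numer sum_distrib_left by (intro sum.cong) (auto simp: rem)
  have pD: "berrut_denom x n z = L * berrut_den_sum x n z"
    unfolding berrut_denom_def berrut_den_sum_def sum_distrib_left by (intro sum.cong) (auto simp: rem)
  have "berrut x n y z = (\<Sum>i\<le>n. (-1)^i * y i / (z - x i)) / berrut_den_sum x n z"
    unfolding berrut_def berrut_basis_def berrut_den_sum_def using nn
    by (simp add: sum_divide_distrib) (intro sum.cong, auto)
  also have "\<dots> = poly (berrut_numer x n y) z / berrut_denom x n z" using L0 by (simp add: pP pD)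
  finally show ?thesis .
qed

lemma berrut_numer_ratio_eq_berrut:
  assumes "strict_antimono_on {..n} x"
  shows "poly (berrut_numer x n y) z / berrut_denom x n z = berrut x n y z"
proof (cases "\<exists>k\<le>n. z = x k")
  case True
  then obtain j where "j \<le> n" "z = x j" by auto
  then show ?thesis using berrut_numer_ratio_at_node[OF assms] berrut_at_node[OF assms] by simp
next
  case False then show ?thesis using berrut_eq_ratio_off_nodes by simp
qed

lemma berrut_unique_rational_interpolant:
  assumes sd: "strict_antimono_on {..n} x"
  shows "{r. \<exists>p :: real poly. degree p \<le> n \<and> (\<forall>z. r z = poly p z / berrut_denom x n z)
              \<and> (\<forall>j\<le>n. r (x j) = y j)} = {berrut x n y}"
proof (intro equalityI subsetI)
  fix r assume "r \<in> {r. \<exists>p :: real poly. degree p \<le> n \<and> (\<forall>z. r z = poly p z / berrut_denom x n z)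
              \<and> (\<forall>j\<le>n. r (x j) = y j)}"
  then obtain p :: "real poly" where deg: "degree p \<le> n"
    and r: "\<And>z. r z = poly p z / berrut_denom x n z" and interp: "\<And>j. j \<le> n \<Longrightarrow> r (x j) = y j"
    by blast
  have "p = berrut_numer x n y"
  proof (rule berrut_numer_unique[OF sd deg])
    fix j assume j: "j \<le> n"
    then have "poly p (x j) / berrut_denom x n (x j)
        = poly (berrut_numer x n y) (x j) / berrut_denom x n (x j)"
      using r[of "x j"] interp[OF j] berrut_numer_ratio_at_node[OF sd j] by simp
    then show "poly p (x j) = poly (berrut_numer x n y) (x j)"
      using berrut_denom_at_node_nonzero[OF sd j] by simp
  qed
  then show "r \<in> {berrut x n y}" using r berrut_numer_ratio_eq_berrut[OF sd] by auto
next
  fix r assume "r \<in> {berrut x n y}"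
  then have "r = berrut x n y" by simp
  then show "r \<in> {r. \<exists>p :: real poly. degree p \<le> n \<and> (\<forall>z. r z = poly p z / berrut_denom x n z)
              \<and> (\<forall>j\<le>n. r (x j) = y j)}"
    using degree_berrut_numer berrut_numer_ratio_eq_berrut[OF sd] berrut_at_node[OF sd]
    by (intro CollectI exI[of _ "berrut_numer x n y"]) auto
qed

text \<open>The arccosines of the nodes in the theorem satisfy this with \<open>u = pi / N\<close> and
  \<open>G = s + 1\<close>.\<close>
definition spaced_angles :: "(nat \<Rightarrow> real) \<Rightarrow> nat \<Rightarrow> real \<Rightarrow> real \<Rightarrow> bool" where
  "spaced_angles t n u G \<longleftrightarrow> 0 < u \<and> 1 \<le> G \<and> G * u < pi \<and> 3 \<le> n \<and> 0 \<le> t 0 \<and> t n \<le> pi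
     \<and> t 0 \<le> (G - 1) * u \<and> pi - t n \<le> (G - 1) * u
     \<and> (\<forall>i<n. u \<le> t (Suc i) - t i \<and> t (Suc i) - t i \<le> G * u)"

lemma spaced_angles_diff:
  assumes "spaced_angles t n u G" "i \<le> j" "j \<le> n"
  shows "real (j - i) * u \<le> t j - t i"
  using assms(2,3)
proof (induction j)
  case (Suc j)
  show ?case
  proof (cases "i = Suc j")
    case False
    then have "i \<le> j" using Suc by simp
    then have "real (j - i) * u \<le> t j - t i" using Suc by simp
    moreover have "u \<le> t (Suc j) - t j" using assms(1) Suc unfolding spaced_angles_def by auto
    moreover have "real (Suc j - i) = real (j - i) + 1" using \<open>i \<le> j\<close> by (simp add: Suc_diff_le)
    ultimately show ?thesis by (simp add: algebra_simps)
  qed simp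
qed simp

lemma spaced_angles_strict:
  assumes "spaced_angles t n u G" "i < j" "j \<le> n"
  shows "t i < t j"
proof -
  have u: "0 < u" using assms(1) by (simp add: spaced_angles_def)
  then have "1 * u \<le> real (j - i) * u" using assms by (intro mult_right_mono) auto
  then show ?thesis using spaced_angles_diff[OF assms(1), of i j] assms u by linarith
qed

lemma spaced_angles_mono:
  "spaced_angles t n u G \<Longrightarrow> i \<le> j \<Longrightarrow> j \<le> n \<Longrightarrow> t i \<le> t j"
  by (cases "i = j") (auto simp: le_less dest: spaced_angles_strict)

lemma spaced_angles_range:
  "spaced_angles t n u G \<Longrightarrow> i \<le> n \<Longrightarrow> 0 \<le> t i \<and> t i \<le> pi"
  using spaced_angles_mono[of t n u G 0 i] spaced_angles_mono[of t n u G i n]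
  unfolding spaced_angles_def by auto

lemma spaced_angles_cos_antimono:
  assumes "spaced_angles t n u G" shows "strict_antimono_on {..n} (\<lambda>i. cos (t i))"
proof (rule monotone_onI)
  fix i j assume "i \<in> {..n}" "j \<in> {..n}" "i < j"
  then show "cos (t j) < cos (t i)"
    using spaced_angles_strict[OF assms, of i j] spaced_angles_range[OF assms]
    by (intro cos_monotone_0_pi) auto
qed

lemma spaced_angles_reflect:
  assumes "spaced_angles t n u G" shows "spaced_angles (\<lambda>i. pi - t (n - i)) n u G"
proof -
  have gap: "u \<le> t (Suc i) - t i \<and> t (Suc i) - t i \<le> G * u" if "i < n" for i
    using assms that unfolding spaced_angles_def by blast
  have "u \<le> t (n - i) - t (n - Suc i) \<and> t (n - i) - t (n - Suc i) \<le> G * u" if "i < n" for i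
  proof -
    have "n - i = Suc (n - Suc i)" using that by simp
    then show ?thesis using gap[of "n - Suc i"] that by simp
  qed
  then show ?thesis using assms unfolding spaced_angles_def by auto
qed

lemma reflect_nodes_cos: "reflect_nodes (\<lambda>i. cos (t i)) n = (\<lambda>i. cos (pi - t (n - i)))"
  unfolding reflect_nodes_def by auto

lemma spaced_angles_between:
  assumes c: "spaced_angles t n u G" and k: "k < n" and ph: "t k < phi" "phi < t (Suc k)"
  shows "0 < phi" "phi < pi" "cos (t (Suc k)) < cos phi" "cos phi < cos (t k)"
proof -
  show "0 < phi" "phi < pi" using spaced_angles_range[OF c, of k] spaced_angles_range[OF c, of "Suc k"] k ph by auto
  then show "cos (t (Suc k)) < cos phi" "cos phi < cos (t k)"
    using spaced_angles_range[OF c, of k] spaced_angles_range[OF c, of "Suc k"] k ph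
    by (auto intro!: cos_monotone_0_pi)
qed

lemma two_thirds_sin_mid_le_sin:
  fixes B phi :: real
  assumes "0 \<le> B" "B < phi" "phi - B \<le> pi - phi"
  shows "(2/3) * sin ((B + phi)/2) \<le> sin phi"
proof -
  define m where "m = (B + phi)/2"
  define p where "p = phi - B"
  define w where "w = pi - phi"
  have p: "0 < p" "p \<le> w" using assms by (auto simp: p_def w_def)
  have sm: "0 \<le> sin m" using assms by (intro sin_ge_zero) (auto simp: m_def)
  have sw: "sin phi = sin w" by (simp add: w_def)
  consider "phi \<le> pi/2" | "pi/2 < phi" "pi/2 \<le> m" | "pi/2 < phi" "m < pi/2" by linarith
  then have "(2/3) * sin m \<le> sin phi"
  proof cases
    case 1
    then have "sin m \<le> sin phi" using assms by (intro sin_monotone_2pi_le) (auto simp: m_def)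
    then show ?thesis using sm by simp
  next
    case 2
    have "m = pi - (w + p/2)" by (simp add: m_def w_def p_def field_simps)
    then have sm': "sin m = sin (w + p/2)" by simp
    have "w * sin (w + p/2) \<le> (w + p/2) * sin w"
      using mult_sin_le_mult_sin[of w "w + p/2"] p 2 by (simp add: m_def w_def p_def)
    also have "\<dots> \<le> (3/2 * w) * sin w"
      using p sin_ge_zero[of w] assms by (intro mult_right_mono) (auto simp: w_def)
    finally have "sin (w + p/2) \<le> 3/2 * sin w" using p by (simp add: mult.assoc)
    then show ?thesis using sm' sw by simp
  next
    case 3
    have w: "pi/3 < w" "w < pi/2" using 3 p by (auto simp: m_def w_def p_def)
    then have "2/3 < 2 * w / pi" by (simp add: field_simps)
    moreover have "2 * w / pi \<le> sin w" using jordan_sin_ge[of w] w p by simp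
    ultimately show ?thesis using sw sin_le_one[of m] by linarith
  qed
  then show ?thesis by (simp add: m_def)
qed

lemma cos_diff_le_mult_sin_mid:
  fixes B phi :: real assumes "0 \<le> B" "B < phi" "phi \<le> pi"
  shows "0 < cos B - cos phi" "cos B - cos phi \<le> (phi - B) * sin ((B + phi)/2)"
proof -
  show "0 < cos B - cos phi" using cos_monotone_0_pi[of B phi] assms by simp
  have e: "cos B - cos phi = 2 * sin ((B + phi)/2) * sin ((phi - B)/2)" by (rule cos_diff_cos)
  have "0 \<le> sin ((B + phi)/2)" using assms by (intro sin_ge_zero) auto
  moreover have "sin ((phi - B)/2) \<le> (phi - B)/2" using assms by (intro sin_x_le_x) auto
  ultimately have "2 * sin ((B + phi)/2) * sin ((phi - B)/2) \<le> 2 * sin ((B + phi)/2) * ((phi - B)/2)"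
    by (intro mult_left_mono) auto
  then show "cos B - cos phi \<le> (phi - B) * sin ((B + phi)/2)" using e by (simp add: mult.commute)
qed

lemma inverse_cos_diff_ge:
  fixes B phi u :: real
  assumes "0 \<le> B" "B < phi" "phi - B \<le> pi - phi" "0 < u"
  shows "(2/3) * (u / (phi - B)) \<le> u * sin phi / (cos B - cos phi)"
proof -
  have c: "0 < cos B - cos phi" "cos B - cos phi \<le> (phi - B) * sin ((B + phi)/2)"
    using cos_diff_le_mult_sin_mid[of B phi] assms by auto
  have sm: "0 < sin ((B + phi)/2)" using assms by (intro sin_gt_zero) auto
  have s1: "(2/3) * sin ((B + phi)/2) \<le> sin phi" by (rule two_thirds_sin_mid_le_sin) (use assms in auto)
  have "(2/3) * (u / (phi - B)) = u * ((2/3) * sin ((B + phi)/2)) / ((phi - B) * sin ((B + phi)/2))"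
    using sm assms by (simp add: field_simps)
  also have "\<dots> \<le> u * sin phi / (cos B - cos phi)"
    using s1 c sm assms by (intro frac_le mult_left_mono) auto
  finally show ?thesis .
qed

lemma sin_ge_ratio_sin_shift:
  fixes x p q :: real
  assumes p: "0 < p" "p \<le> pi/2" and q: "0 < q" "q/2 \<le> x" and y: "x + p/2 \<le> pi"
  shows "q / (p + q) / 2 * sin (x + p/2) \<le> sin x"
proof -
  define r where "r = q / (p + q)"
  define y where "y = x + p/2"
  have r: "0 < r" "r \<le> 1" using p q by (auto simp: r_def field_simps)
  have sy: "0 \<le> sin y" using p q y by (intro sin_ge_zero) (auto simp: y_def)
  consider "y \<le> pi/2" | "pi/2 \<le> x" | "x < pi/2" "pi/2 < y" by linarith
  then have "r/2 * sin y \<le> sin x"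
  proof cases
    case 1
    have y0: "0 < y" using p q by (simp add: y_def)
    have "q * y \<le> x * (p + q)" using p q mult_right_mono[of "q/2" x p] by (simp add: y_def algebra_simps)
    then have "r \<le> x / y" using p q y0 by (simp add: r_def divide_simps)
    then have "r * sin y \<le> x * sin y / y" using sy by (metis mult_right_mono times_divide_eq_left)
    also have "\<dots> \<le> y * sin x / y"
      using mult_sin_le_mult_sin[of x y] p q 1 y0 by (intro divide_right_mono) (auto simp: y_def)
    finally have "r * sin y \<le> sin x" using y0 by simp
    moreover have "r/2 * sin y \<le> r * sin y" using r sy by (intro mult_right_mono) auto
    ultimately show ?thesis by simp
  next
    case 2
    have "sin (pi - y) \<le> sin (pi - x)"
      using 2 p y by (intro sin_monotone_2pi_le) (auto simp: y_def)
    then have "sin y \<le> sin x" by simp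
    moreover have "r/2 * sin y \<le> sin y" using r sy by (intro mult_left_le_one_le) auto
    ultimately show ?thesis by simp
  next
    case 3
    have "pi/4 \<le> x" using 3 p by (simp add: y_def)
    then have "1/2 \<le> 2 * x / pi" by (simp add: field_simps)
    moreover have "2 * x / pi \<le> sin x" using jordan_sin_ge[of x] 3 q by simp
    ultimately have "1/2 \<le> sin x" by linarith
    moreover have "r/2 * sin y \<le> 1/2 * 1" using r sin_le_one[of y] sy by (intro mult_mono) auto
    ultimately show ?thesis by simp
  qed
  then show ?thesis by (simp add: r_def y_def)
qed

lemma cos_diff_ratio_ge:
  fixes A B phi :: real
  assumes "0 \<le> A" "A < B" "B < phi" "phi \<le> pi" "phi - B \<le> pi/2"
  shows "(1/2) * ((B - A) / (phi - A))\<^sup>2 * (cos A - cos phi) \<le> cos A - cos B"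
proof -
  define p where "p = phi - B"
  define q where "q = B - A"
  define x where "x = (A + B)/2"
  define r where "r = q / (p + q)"
  have p0: "0 < p" and q0: "0 < q" using assms by (auto simp: p_def q_def)
  have r0: "0 < r" using p0 q0 by (auto simp: r_def)
  have e1: "cos A - cos B = 2 * sin x * sin (q/2)"
    using cos_diff_cos[of A B] by (simp add: x_def q_def)
  have e2: "cos A - cos phi = 2 * sin (x + p/2) * sin ((p+q)/2)"
    using cos_diff_cos[of A phi] by (simp add: x_def p_def q_def field_simps)
  have "x + p/2 = (A + phi)/2" by (simp add: x_def p_def field_simps)
  then have sy: "0 \<le> sin (x + p/2)" using assms by (auto intro!: sin_ge_zero)
  have sx: "0 \<le> sin x" using assms by (intro sin_ge_zero) (auto simp: x_def)
  have spq: "0 \<le> sin ((p+q)/2)" using assms by (intro sin_ge_zero) (auto simp: p_def q_def)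
  have h1: "r * sin ((p+q)/2) \<le> sin (q/2)"
  proof -
    have "q/2 * sin ((p+q)/2) \<le> (p+q)/2 * sin (q/2)"
      using mult_sin_le_mult_sin[of "q/2" "(p+q)/2"] p0 q0 assms by (auto simp: p_def q_def)
    then show ?thesis using p0 q0 by (simp add: r_def field_simps)
  qed
  have h2: "r/2 * sin (x + p/2) \<le> sin x"
    unfolding r_def using sin_ge_ratio_sin_shift[of p q x] assms
    by (simp add: p_def q_def x_def field_simps)
  have "(1/2) * r\<^sup>2 * (cos A - cos phi) = 2 * (r/2 * sin (x + p/2)) * (r * sin ((p+q)/2))"
    using e2 by (simp add: power2_eq_square algebra_simps)
  also have "\<dots> \<le> 2 * sin x * sin (q/2)"
    using h1 h2 r0 sx sy spq by (intro mult_mono mult_left_mono) auto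
  also have "\<dots> = cos A - cos B" using e1 by simp
  finally show ?thesis by (simp add: r_def p_def q_def)
qed

lemma gap_ratio_bound:
  fixes p q u G :: real
  assumes "0 < p" "0 < u" "u \<le> q" "2 * p \<le> G * u" "1 \<le> G"
  shows "(8/3) / (G * (G + 2)\<^sup>2) \<le> (2/3) * (u / p) * ((1/2) * (q / (p + q))\<^sup>2)"
proof -
  have a1: "2 / G \<le> u / p" using assms by (simp add: field_simps)
  have "2 / (G + 2) \<le> q / (p + q)"
  proof -
    have "G * u \<le> G * q" using assms by (intro mult_left_mono) auto
    then have "2 * p \<le> G * q" using assms(4) by linarith
    then have "2 * (p + q) \<le> q * (G + 2)" by (simp add: algebra_simps)
    then show ?thesis using assms by (simp add: field_simps)
  qed
  then have a2: "(2 / (G + 2))\<^sup>2 \<le> (q / (p + q))\<^sup>2" using assms by (intro power_mono) auto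
  have "(8/3) / (G * (G + 2)\<^sup>2) = (2/3) * (2 / G) * ((1/2) * (2 / (G + 2))\<^sup>2)"
    using assms by (simp add: field_simps power2_eq_square)
  also have "\<dots> \<le> (2/3) * (u / p) * ((1/2) * (q / (p + q))\<^sup>2)"
    using a1 a2 assms by (intro mult_mono mult_left_mono) auto
  finally show ?thesis .
qed

text \<open>The first two terms of the alternating sum left of \<open>phi\<close>, for nodes \<open>A < B < phi\<close>
  whose right neighbour is \<open>phi + p'\<close>; with the next lemma, this bounds the Berrut
  denominator below by a multiple of \<open>1 / (u sin phi)\<close>.\<close>
lemma inverse_cos_diff_pair_ge:
  fixes A B phi p' u G :: real
  assumes A0: "0 \<le> A" and AB: "A + u \<le> B" and Bphi: "B < phi" and pp: "phi - B \<le> p'"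
    and ppG: "(phi - B) + p' \<le> G * u" and php: "phi + p' \<le> pi" and Gu: "G * u < pi"
    and u0: "0 < u" and G1: "1 \<le> G"
  shows "(8/3) / (G * (G + 2)\<^sup>2) \<le> u * sin phi * (1 / (cos B - cos phi) - 1 / (cos A - cos phi))"
proof -
  have phipi: "phi \<le> pi" using php pp Bphi by simp
  have cb: "0 < cos B - cos phi" using cos_diff_le_mult_sin_mid(1)[of B phi] A0 AB u0 Bphi phipi by simp
  have ca: "0 < cos A - cos phi" using cos_diff_le_mult_sin_mid(1)[of A phi] A0 AB u0 Bphi phipi by simp
  have X: "(2/3) * (u / (phi - B)) \<le> u * sin phi / (cos B - cos phi)"
    using inverse_cos_diff_ge[of B phi u] A0 AB u0 Bphi pp php by simp
  have "(1/2) * ((B - A) / (phi - A))\<^sup>2 * (cos A - cos phi) \<le> cos A - cos B"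
    using cos_diff_ratio_ge[of A B phi] A0 AB u0 Bphi phipi pp ppG Gu by simp
  then have R: "(1/2) * ((B - A) / (phi - A))\<^sup>2 \<le> (cos A - cos B) / (cos A - cos phi)"
    using ca by (simp add: field_simps)
  have "0 \<le> sin phi" using Bphi A0 AB u0 phipi by (intro sin_ge_zero) auto
  then have "(2/3) * (u / (phi - B)) * ((1/2) * ((B - A) / (phi - A))\<^sup>2)
      \<le> (u * sin phi / (cos B - cos phi)) * ((cos A - cos B) / (cos A - cos phi))"
    using X R u0 Bphi cb by (intro mult_mono) auto
  also have "\<dots> = u * sin phi * (1 / (cos B - cos phi) - 1 / (cos A - cos phi))"
    using ca cb by (simp add: field_simps)
  finally show ?thesis
    using gap_ratio_bound[of "phi - B" u "B - A" G] u0 AB Bphi pp ppG G1 by simp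
qed

lemma inverse_cos_diff_single_ge:
  fixes B phi p' u G :: real
  assumes B0: "0 \<le> B" and Bphi: "B < phi" and pp: "phi - B \<le> p'"
    and ppG: "(phi - B) + p' \<le> G * u" and php: "phi + p' \<le> pi"
    and u0: "0 < u" and G1: "1 \<le> G"
  shows "(8/3) / (G * (G + 2)\<^sup>2) \<le> u * sin phi / (cos B - cos phi)"
proof -
  have X: "(2/3) * (u / (phi - B)) \<le> u * sin phi / (cos B - cos phi)"
    using inverse_cos_diff_ge[of B phi u] B0 u0 Bphi pp php by simp
  have G0: "0 < G" using G1 by simp
  have a1: "2 / G \<le> u / (phi - B)" using pp ppG Bphi G0 u0 by (simp add: field_simps)
  have "(8/3) / (G * (G + 2)\<^sup>2) \<le> (2/3) * (2 / G)"
  proof -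
    have "3\<^sup>2 \<le> (G + 2)\<^sup>2" by (rule power_mono) (use G1 in auto)
    hence "2 \<le> (G + 2)\<^sup>2" by simp
    then show ?thesis using G0 by (simp add: field_simps)
  qed
  also have "\<dots> \<le> (2/3) * (u / (phi - B))" using a1 by (intro mult_left_mono) auto
  finally show ?thesis using X by simp
qed

lemma half_sin_le_sin_mid:
  fixes phi t :: real assumes "0 \<le> phi" "phi \<le> pi" "0 \<le> t" "t \<le> pi"
  shows "sin phi / 2 \<le> sin ((phi + t)/2)"
proof -
  have sd: "sin phi = 2 * sin (phi/2) * cos (phi/2)" using sin_double[of "phi/2"] by simp
  have s0: "0 \<le> sin (phi/2)" "sin (phi/2) \<le> 1" using assms by (auto intro: sin_ge_zero)
  have c0: "0 \<le> cos (phi/2)" "cos (phi/2) \<le> 1" using assms by (auto intro: cos_ge_zero)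
  have "sin (phi/2) * cos (phi/2) \<le> sin ((phi + t)/2)"
  proof (cases "(phi + t)/2 \<le> pi/2")
    case True
    have "sin (phi/2) \<le> sin ((phi + t)/2)"
    proof (rule sin_monotone_2pi_le)
      show "- (pi / 2) \<le> phi / 2" using assms by simp
      show "phi / 2 \<le> (phi + t) / 2" using assms by simp
      show "(phi + t) / 2 \<le> pi / 2" using True by simp
    qed
    moreover have "sin (phi/2) * cos (phi/2) \<le> sin (phi/2)" using s0 c0 by (simp add: mult_left_le)
    ultimately show ?thesis by simp
  next
    case False
    have "sin ((pi - phi)/2) \<le> sin (pi - (phi + t)/2)"
    proof (rule sin_monotone_2pi_le)
      show "- (pi / 2) \<le> (pi - phi) / 2" using assms by simp
      show "(pi - phi) / 2 \<le> pi - (phi + t) / 2" using assms by (simp add: field_simps)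
      show "pi - (phi + t) / 2 \<le> pi / 2" using False by simp
    qed
    moreover have "sin ((pi - phi)/2) = cos (phi/2)"
      using sin_cos_eq[of "(pi - phi)/2"] by (simp add: field_simps)
    moreover have "sin (phi/2) * cos (phi/2) \<le> cos (phi/2)" using s0 c0 by (simp add: mult_left_le_one_le)
    ultimately show ?thesis by simp
  qed
  then show ?thesis using sd by simp
qed

lemma abs_cos_diff_ge:
  fixes phi t :: real assumes "0 \<le> phi" "phi \<le> pi" "0 \<le> t" "t \<le> pi"
  shows "sin phi * \<bar>phi - t\<bar> / pi \<le> \<bar>cos phi - cos t\<bar>"
proof -
  have half: "sin (\<bar>phi - t\<bar> / 2) = \<bar>sin ((t - phi) / 2)\<bar>"
  proof (cases "phi \<le> t")
    case True
    then show ?thesis using assms by (simp add: abs_of_nonneg sin_ge_zero)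
  next
    case False
    then have "sin ((t - phi) / 2) = - sin ((phi - t) / 2)"
      by (metis minus_diff_eq minus_divide_left sin_minus)
    then show ?thesis using False assms by (simp add: abs_of_nonneg sin_ge_zero)
  qed
  have "\<bar>phi - t\<bar> / pi \<le> \<bar>sin ((t - phi) / 2)\<bar>"
    unfolding half[symmetric] using assms by (intro sin_half_ge) auto
  moreover have "sin phi / 2 \<le> sin ((phi + t) / 2)" using assms by (intro half_sin_le_sin_mid)
  moreover have "0 \<le> sin phi" using assms by (simp add: sin_ge_zero)
  ultimately have "sin phi / 2 * (\<bar>phi - t\<bar> / pi) \<le> sin ((phi + t) / 2) * \<bar>sin ((t - phi) / 2)\<bar>"
    by (intro mult_mono) auto
  moreover have "\<bar>cos phi - cos t\<bar> = 2 * sin ((phi + t) / 2) * \<bar>sin ((t - phi) / 2)\<bar>"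
    using cos_diff_cos[of phi t] assms by (simp add: abs_mult sin_ge_zero)
  ultimately show ?thesis by simp
qed

lemma inverse_abs_cos_diff_le:
  fixes phi t d :: real
  assumes "0 \<le> phi" "phi \<le> pi" "0 \<le> t" "t \<le> pi" "0 < sin phi" "0 < d" "d \<le> \<bar>phi - t\<bar>"
  shows "1 / \<bar>cos phi - cos t\<bar> \<le> pi / (sin phi * d)"
proof -
  have "sin phi * d / pi \<le> sin phi * \<bar>phi - t\<bar> / pi"
    using assms by (intro divide_right_mono mult_left_mono) auto
  also have "\<dots> \<le> \<bar>cos phi - cos t\<bar>" using abs_cos_diff_ge assms by blast
  finally have "inverse \<bar>cos phi - cos t\<bar> \<le> inverse (sin phi * d / pi)"
    by (rule le_imp_inverse_le) (use assms in simp)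
  then show ?thesis by (simp add: inverse_eq_divide)
qed

lemma abs_berrut_den_sum_ge_inner:
  assumes c: "spaced_angles t n u G" and k: "k < n"
    and ph: "t k < phi" "phi < t (Suc k)" "phi - t k \<le> t (Suc k) - phi"
  shows "(8/3) / (G * (G + 2)\<^sup>2) \<le> u * sin phi * \<bar>berrut_den_sum (\<lambda>i. cos (t i)) n (cos phi)\<bar>"
proof -
  have u: "0 < u" and G: "1 \<le> G" "G * u < pi" using c unfolding spaced_angles_def by auto
  have gap: "\<And>i. i < n \<Longrightarrow> u \<le> t (Suc i) - t i \<and> t (Suc i) - t i \<le> G * u"
    using c unfolding spaced_angles_def by auto
  note rng = spaced_angles_range[OF c]
  note between = spaced_angles_between[OF c k ph(1,2)]
  define l where "l = 1 / (cos (t k) - cos phi)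
                     - (if 0 < k then 1 / (cos (t (k - 1)) - cos phi) else 0)"
  have "l \<le> \<bar>berrut_den_sum (\<lambda>i. cos (t i)) n (cos phi)\<bar>"
    using abs_berrut_den_sum_ge_between[OF spaced_angles_cos_antimono[OF c], of k "cos phi"]
      between k unfolding l_def by fastforce
  moreover have "(8/3) / (G * (G + 2)\<^sup>2) \<le> u * sin phi * l"
  proof (cases "k = 0")
    case True
    then show ?thesis unfolding l_def
      using inverse_cos_diff_single_ge[of "t 0" phi "t 1 - phi" G u] rng[of 0] rng[of 1]
        ph gap[of 0] k u G by auto
  next
    case False
    have "(8/3) / (G * (G + 2)\<^sup>2)
        \<le> u * sin phi * (1 / (cos (t k) - cos phi) - 1 / (cos (t (k - 1)) - cos phi))"
    proof (rule inverse_cos_diff_pair_ge[where p'="t (Suc k) - phi"])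
      have "k - 1 < n" "Suc (k - 1) = k" using False k by auto
      then show "t (k - 1) + u \<le> t k" using gap[of "k - 1"] by simp
      show "phi - t k + (t (Suc k) - phi) \<le> G * u" using gap[of k] k by auto
    qed (use rng[of "k - 1"] rng[of "Suc k"] k ph u G in auto)
    then show ?thesis using False by (simp add: l_def)
  qed
  moreover have "0 \<le> u * sin phi" using between(1,2) u by (simp add: sin_ge_zero)
  ultimately show ?thesis by (meson mult_left_mono order_trans)
qed

lemma sum_inverse_diff_eq_harm: "(\<Sum>i<k. 1 / real (k - i)) = (harm k :: real)"
proof -
  have "(\<Sum>i<k. 1 / real (k - i)) = (\<Sum>j<k. 1 / real (Suc j))"
    by (rule sum.reindex_bij_witness[where i="\<lambda>j. k - Suc j" and j="\<lambda>i. k - Suc i"]) auto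
  then show ?thesis by (simp add: harm_altdef divide_inverse)
qed

lemma sum_inverse_shift_eq_harm:
  "(\<Sum>i\<in>{Suc (Suc k)..n}. 1 / real (i - Suc k)) = (harm (n - Suc k) :: real)"
proof -
  have "(\<Sum>i\<in>{Suc (Suc k)..n}. 1 / real (i - Suc k)) = (\<Sum>j<n - Suc k. 1 / real (Suc j))"
    by (rule sum.reindex_bij_witness[where i="\<lambda>j. j + Suc (Suc k)" and j="\<lambda>i. i - Suc (Suc k)"])
      auto
  then show ?thesis by (simp add: harm_altdef divide_inverse)
qed

lemma sum_atMost_split_pair:
  fixes f :: "nat \<Rightarrow> real" assumes "k < n"
  shows "(\<Sum>i\<le>n. f i) = (\<Sum>i<k. f i) + f k + f (Suc k) + (\<Sum>i\<in>{Suc (Suc k)..n}. f i)"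
proof -
  have "{..n} = {..<k} \<union> {k..n}" using assms by auto
  moreover have "sum f ({..<k} \<union> {k..n}) = sum f {..<k} + sum f {k..n}"
    by (rule sum.union_disjoint) auto
  ultimately have "(\<Sum>i\<le>n. f i) = (\<Sum>i<k. f i) + (\<Sum>i\<in>{k..n}. f i)"
    by simp
  also have "(\<Sum>i\<in>{k..n}. f i) = f k + f (Suc k) + (\<Sum>i\<in>{Suc (Suc k)..n}. f i)"
    using assms by (simp add: sum.atLeast_Suc_atMost)
  finally show ?thesis by simp
qed

lemma inverse_dist_le_spaced:
  assumes c: "spaced_angles t n u G" and i: "i \<le> n" and ph: "0 < phi" "phi < pi"
    and m: "0 < m" "m * u \<le> \<bar>phi - t i\<bar>"
  shows "1 / \<bar>cos phi - cos (t i)\<bar> \<le> pi / (u * sin phi) * (1 / m)"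
proof -
  have "0 < u" using c unfolding spaced_angles_def by simp
  then show ?thesis
    using inverse_abs_cos_diff_le[of phi "t i" "m * u"] spaced_angles_range[OF c i] ph m
      sin_gt_zero[OF ph] by (simp add: field_simps)
qed

lemma sum_inverse_dist_left_le:
  assumes c: "spaced_angles t n u G" and k: "k \<le> n" and ph: "t k < phi" "phi < pi"
  shows "(\<Sum>i<k. 1 / \<bar>cos phi - cos (t i)\<bar>) \<le> pi / (u * sin phi) * harm k"
proof -
  have phi: "0 < phi" using spaced_angles_range[OF c k] ph by simp
  have "(\<Sum>i<k. 1 / \<bar>cos phi - cos (t i)\<bar>) \<le> (\<Sum>i<k. pi / (u * sin phi) * (1 / real (k - i)))"
  proof (rule sum_mono)
    fix i assume "i \<in> {..<k}"
    then have i: "i < k" by simp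
    have "real (k - i) * u \<le> t k - t i" using spaced_angles_diff[OF c, of i k] i k by simp
    then have "real (k - i) * u \<le> \<bar>phi - t i\<bar>" using ph by linarith
    then show "1 / \<bar>cos phi - cos (t i)\<bar> \<le> pi / (u * sin phi) * (1 / real (k - i))"
      using i k phi ph by (intro inverse_dist_le_spaced[OF c]) auto
  qed
  also have "\<dots> = pi / (u * sin phi) * harm k"
    by (simp only: sum_distrib_left[symmetric] sum_inverse_diff_eq_harm)
  finally show ?thesis .
qed

lemma sum_inverse_dist_right_le:
  assumes c: "spaced_angles t n u G" and k: "Suc k \<le> n" and ph: "0 < phi" "phi < t (Suc k)"
  shows "(\<Sum>i\<in>{Suc (Suc k)..n}. 1 / \<bar>cos phi - cos (t i)\<bar>) \<le> pi / (u * sin phi) * harm (n - Suc k)"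
proof -
  have phi: "phi < pi" using spaced_angles_range[OF c k] ph by simp
  have "(\<Sum>i\<in>{Suc (Suc k)..n}. 1 / \<bar>cos phi - cos (t i)\<bar>)
      \<le> (\<Sum>i\<in>{Suc (Suc k)..n}. pi / (u * sin phi) * (1 / real (i - Suc k)))"
  proof (rule sum_mono)
    fix i assume i: "i \<in> {Suc (Suc k)..n}"
    have "real (i - Suc k) * u \<le> t i - t (Suc k)" using spaced_angles_diff[OF c, of "Suc k" i] i by simp
    then have "real (i - Suc k) * u \<le> \<bar>phi - t i\<bar>" using ph by linarith
    then show "1 / \<bar>cos phi - cos (t i)\<bar> \<le> pi / (u * sin phi) * (1 / real (i - Suc k))"
      using i phi ph by (intro inverse_dist_le_spaced[OF c]) auto
  qed
  also have "\<dots> = pi / (u * sin phi) * harm (n - Suc k)"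
    by (simp only: sum_distrib_left[symmetric] sum_inverse_shift_eq_harm)
  finally show ?thesis .
qed

text \<open>The two neighbours of \<open>phi\<close> are absorbed by the denominator, up to the terms of the
  second neighbours.\<close>
lemma inv_dist_sum_le_inner:
  assumes c: "spaced_angles t n u G" and k: "k < n"
    and ph: "t k < phi" "phi < t (Suc k)"
  defines "P \<equiv> pi / (u * sin phi)"
  shows "inv_dist_sum (\<lambda>i. cos (t i)) n (cos phi)
           \<le> \<bar>berrut_den_sum (\<lambda>i. cos (t i)) n (cos phi)\<bar> + P * (2 + harm k + harm (n - Suc k))"
proof -
  have u: "0 < u" using c unfolding spaced_angles_def by auto
  have gap: "\<And>i. i < n \<Longrightarrow> u \<le> t (Suc i) - t i" using c unfolding spaced_angles_def by auto
  note rng = spaced_angles_range[OF c]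
  note between = spaced_angles_between[OF c k ph]
  define b2 where "b2 = (if 0 < k then 1 / (cos (t (k - 1)) - cos phi) else 0)"
  define a2 where "a2 = (if Suc k < n then 1 / (cos phi - cos (t (Suc (Suc k)))) else 0)"
  have P0: "0 \<le> P" using u between sin_gt_zero[of phi] by (simp add: P_def)
  have "b2 \<le> P"
  proof (cases "0 < k")
    case True
    then have "k - 1 < n" "Suc (k - 1) = k" using k by auto
    then have "1 * u \<le> \<bar>phi - t (k - 1)\<bar>" using gap[of "k - 1"] ph by simp
    moreover have "cos phi < cos (t (k - 1))"
      using spaced_angles_mono[OF c, of "k - 1" k] rng[of "k - 1"] k ph between
      by (intro cos_monotone_0_pi) auto
    ultimately show ?thesis
      using inverse_dist_le_spaced[OF c, of "k - 1" phi 1] True k between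
      by (simp add: b2_def P_def abs_minus_commute)
  qed (simp add: b2_def P0)
  moreover have "a2 \<le> P"
  proof (cases "Suc k < n")
    case True
    then have "1 * u \<le> \<bar>phi - t (Suc (Suc k))\<bar>" using gap[of "Suc k"] ph by simp
    moreover have "cos (t (Suc (Suc k))) < cos phi"
      using spaced_angles_mono[OF c, of "Suc k" "Suc (Suc k)"] rng[of "Suc (Suc k)"] ph between True
      by (intro cos_monotone_0_pi) auto
    ultimately show ?thesis
      using inverse_dist_le_spaced[OF c, of "Suc (Suc k)" phi 1] True between
      by (simp add: a2_def P_def)
  qed (simp add: a2_def P0)
  moreover have "1 / \<bar>cos phi - cos (t k)\<bar> + 1 / \<bar>cos phi - cos (t (Suc k))\<bar>
      \<le> \<bar>berrut_den_sum (\<lambda>i. cos (t i)) n (cos phi)\<bar> + b2 + a2"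
    using abs_berrut_den_sum_ge_between[OF spaced_angles_cos_antimono[OF c], of k "cos phi"]
      between k unfolding a2_def b2_def by (auto simp: abs_minus_commute)
  moreover have "inv_dist_sum (\<lambda>i. cos (t i)) n (cos phi)
      = (\<Sum>i<k. 1 / \<bar>cos phi - cos (t i)\<bar>) + 1 / \<bar>cos phi - cos (t k)\<bar>
        + 1 / \<bar>cos phi - cos (t (Suc k))\<bar> + (\<Sum>i\<in>{Suc (Suc k)..n}. 1 / \<bar>cos phi - cos (t i)\<bar>)"
    unfolding inv_dist_sum_def by (rule sum_atMost_split_pair[OF k])
  moreover have "(\<Sum>i<k. 1 / \<bar>cos phi - cos (t i)\<bar>) \<le> P * harm k"
    unfolding P_def using k between by (intro sum_inverse_dist_left_le[OF c _ ph(1)]) auto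
  moreover have "(\<Sum>i\<in>{Suc (Suc k)..n}. 1 / \<bar>cos phi - cos (t i)\<bar>) \<le> P * harm (n - Suc k)"
    unfolding P_def using k between by (intro sum_inverse_dist_right_le[OF c _ _ ph(2)]) auto
  ultimately show ?thesis unfolding distrib_left by linarith
qed

lemma spaced_angles_cos_ne:
  assumes "spaced_angles t n u G" "i \<le> n" "0 \<le> phi" "phi \<le> pi" "phi \<noteq> t i"
  shows "cos phi \<noteq> cos (t i)"
  using cos_inj_pi[of phi "t i"] spaced_angles_range[OF assms(1,2)] assms(3-5) by auto

lemma lebesgue_fun_le_inner:
  assumes c: "spaced_angles t n u G" and k: "k < n"
    and ph: "t k < phi" "phi < t (Suc k)" "phi - t k \<le> t (Suc k) - phi"
  shows "lebesgue_fun (\<lambda>i. cos (t i)) n (cos phi)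
           \<le> 1 + pi * (3 * G * (G + 2)\<^sup>2 / 8) * (2 + harm k + harm (n - Suc k))"
proof -
  define D where "D = \<bar>berrut_den_sum (\<lambda>i. cos (t i)) n (cos phi)\<bar>"
  define H :: real where "H = 2 + harm k + harm (n - Suc k)"
  define C where "C = (8/3) / (G * (G + 2)\<^sup>2)"
  have u: "0 < u" and G: "1 \<le> G" using c unfolding spaced_angles_def by auto
  note between = spaced_angles_between[OF c k ph(1,2)]
  have C: "0 < C" "C \<le> u * sin phi * D"
    using G abs_berrut_den_sum_ge_inner[OF c k ph] by (auto simp: C_def D_def)
  then have "D \<noteq> 0" by auto
  then have D: "0 < D" by (simp add: D_def)
  have H: "0 \<le> H"
    unfolding H_def using harm_nonneg[where 'a=real, of k] harm_nonneg[where 'a=real, of "n - Suc k"]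
    by linarith
  have "phi \<noteq> t i" if "i \<le> n" for i
    using spaced_angles_mono[OF c, of i k] spaced_angles_mono[OF c, of "Suc k" i] ph k that
    by (cases "i \<le> k") auto
  then have off: "\<not> (\<exists>i\<le>n. cos phi = cos (t i))"
    using spaced_angles_cos_ne[OF c] between by fastforce
  have "lebesgue_fun (\<lambda>i. cos (t i)) n (cos phi) = inv_dist_sum (\<lambda>i. cos (t i)) n (cos phi) / D"
    using lebesgue_fun_off_nodes[of n "cos phi" "\<lambda>i. cos (t i)"] off by (simp add: D_def)
  also have "\<dots> \<le> (D + pi / (u * sin phi) * H) / D"
    using inv_dist_sum_le_inner[OF c k ph(1,2)] D by (simp add: D_def H_def divide_right_mono)
  also have "\<dots> = 1 + pi / (u * sin phi * D) * H" using D by (simp add: field_simps)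
  also have "\<dots> \<le> 1 + pi / C * H"
    using C D H by (intro add_left_mono mult_right_mono divide_left_mono) auto
  also have "pi / C = pi * (3 * G * (G + 2)\<^sup>2 / 8)" by (simp add: C_def)
  finally show ?thesis by (simp add: H_def)
qed

lemma spaced_angles_cos_gap_ratio_le:
  assumes c: "spaced_angles t n u G"
  shows "(1 - cos (t 0)) / (cos (t 0) - cos (t 1)) \<le> pi\<^sup>2 / 4 * (G - 1)\<^sup>2"
proof -
  have u: "0 < u" and n: "3 \<le> n" and t0: "t 0 \<le> (G - 1) * u" using c unfolding spaced_angles_def by auto
  have "\<forall>i<n. u \<le> t (Suc i) - t i" using c unfolding spaced_angles_def by blast
  then have t1: "t 0 + u \<le> t 1" using n by (auto dest: spec[of _ 0])
  note rng = spaced_angles_range[OF c]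
  have "1 * u \<le> real (n - 1) * u" using n u by (intro mult_right_mono) auto
  then have t1_pi: "u \<le> pi - t 1" using spaced_angles_diff[OF c, of 1 n] n rng[of n] by simp
  have "(t 0)\<^sup>2 \<le> ((G - 1) * u)\<^sup>2" using t0 rng[of 0] by (intro power_mono) auto
  then have num: "1 - cos (t 0) \<le> ((G - 1) * u)\<^sup>2 / 2" using one_minus_cos_le[of "t 0"] by simp
  have s1: "u / pi \<le> sin ((t 1 - t 0) / 2)"
    using sin_half_ge[of "t 1 - t 0"] t1 u rng[of 0] rng[of 1] n divide_right_mono[of u "t 1 - t 0" pi]
    by auto
  have "u \<le> 2 * min ((t 0 + t 1) / 2) (pi - (t 0 + t 1) / 2)"
    using t1 t1_pi rng[of 0] by (auto simp: min_def field_simps)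
  then have "2 * (u / 2) / pi \<le> 2 * min ((t 0 + t 1) / 2) (pi - (t 0 + t 1) / 2) / pi"
    by (intro divide_right_mono) auto
  also have "\<dots> \<le> sin ((t 0 + t 1) / 2)"
    using rng[of 0] rng[of 1] n by (intro jordan_sin_ge_min) auto
  finally have s2: "u / pi \<le> sin ((t 0 + t 1) / 2)" by simp
  have up: "0 \<le> u / pi" using u by simp
  then have "u / pi * (u / pi) \<le> sin ((t 0 + t 1) / 2) * sin ((t 1 - t 0) / 2)"
    using s2 by (intro mult_mono[OF s2 s1]) auto
  then have "2 * (u / pi)\<^sup>2 \<le> 2 * sin ((t 0 + t 1) / 2) * sin ((t 1 - t 0) / 2)"
    by (simp add: power2_eq_square)
  also have "\<dots> = cos (t 0) - cos (t 1)" by (rule cos_diff_cos[symmetric])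
  finally have den: "2 * (u / pi)\<^sup>2 \<le> cos (t 0) - cos (t 1)" .
  have "(1 - cos (t 0)) / (cos (t 0) - cos (t 1)) \<le> (((G - 1) * u)\<^sup>2 / 2) / (2 * (u / pi)\<^sup>2)"
    using num den u by (intro frac_le) auto
  also have "\<dots> = pi\<^sup>2 / 4 * (G - 1)\<^sup>2" using u by (simp add: field_simps power2_eq_square)
  finally show ?thesis .
qed

lemma sum_inverse_square_telescope:
  fixes a u :: real assumes "0 < a" "0 < u"
  shows "(\<Sum>m\<in>{1..M}. 1 / (a + real m * u)\<^sup>2) \<le> 1 / (a * u) - 1 / ((a + real M * u) * u)"
proof (induction M)
  case (Suc M)
  define b where "b = a + real M * u"
  have b: "0 < b" using assms by (simp add: b_def add_pos_nonneg)
  have "1 / (b + u)\<^sup>2 \<le> 1 / (b * (b + u))"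
    using b assms by (intro divide_left_mono) (auto simp: power2_eq_square)
  also have "\<dots> = 1 / (b * u) - 1 / ((b + u) * u)" using b assms by (simp add: divide_simps)
  finally show ?case using Suc by (simp add: b_def algebra_simps)
qed simp

lemma spaced_angles_sum_ratio_sq_le:
  assumes c: "spaced_angles t n u G"
  shows "(\<Sum>j\<in>{1..n}. (t 1 / t j)\<^sup>2) \<le> 2 * G"
proof -
  have u: "0 < u" and n: "3 \<le> n" using c unfolding spaced_angles_def by auto
  have "\<forall>i<n. u \<le> t (Suc i) - t i \<and> t (Suc i) - t i \<le> G * u" "t 0 \<le> (G - 1) * u"
    using c unfolding spaced_angles_def by blast+
  then have t1: "t 0 + u \<le> t 1" "t 1 \<le> (2 * G - 1) * u"
    using n by (auto dest: spec[of _ 0] simp: algebra_simps)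
  have t1p: "0 < t 1" using t1 spaced_angles_range[OF c, of 0] u by simp
  define a where "a j = t 1 + real (j - 1) * u" for j
  have split: "(\<Sum>j\<in>{1..n}. 1 / (a j)\<^sup>2) = 1 / (t 1)\<^sup>2 + (\<Sum>m\<in>{1..n - 1}. 1 / (t 1 + real m * u)\<^sup>2)"
  proof -
    have "(\<Sum>j\<in>{1..n}. 1 / (a j)\<^sup>2) = 1 / (a 1)\<^sup>2 + (\<Sum>j\<in>{2..n}. 1 / (a j)\<^sup>2)"
      using n by (simp add: sum.atLeast_Suc_atMost numeral_2_eq_2)
    moreover have "(\<Sum>j\<in>{2..n}. 1 / (a j)\<^sup>2) = (\<Sum>m\<in>{1..n - 1}. 1 / (t 1 + real m * u)\<^sup>2)"
      by (rule sum.reindex_bij_witness[where i="\<lambda>m. m + 1" and j="\<lambda>j. j - 1"]) (auto simp: a_def)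
    ultimately show ?thesis by (simp add: a_def)
  qed
  have tel: "(\<Sum>m\<in>{1..n - 1}. 1 / (t 1 + real m * u)\<^sup>2) \<le> 1 / (t 1 * u)"
    using sum_inverse_square_telescope[OF t1p u, of "n - 1"] t1p u
    by (smt (verit) divide_nonneg_nonneg mult_nonneg_nonneg of_nat_0_le_iff)
  have "(\<Sum>j\<in>{1..n}. (t 1 / t j)\<^sup>2) \<le> (\<Sum>j\<in>{1..n}. (t 1)\<^sup>2 * (1 / (a j)\<^sup>2))"
  proof (rule sum_mono)
    fix j assume j: "j \<in> {1..n}"
    have "a j \<le> t j" using spaced_angles_diff[OF c, of 1 j] j by (simp add: a_def)
    moreover have "0 < a j" using t1p u by (simp add: a_def add_pos_nonneg)
    ultimately have "1 / (t j)\<^sup>2 \<le> 1 / (a j)\<^sup>2" by (intro frac_le power_mono) auto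
    then have "(t 1)\<^sup>2 * (1 / (t j)\<^sup>2) \<le> (t 1)\<^sup>2 * (1 / (a j)\<^sup>2)" by (rule mult_left_mono) simp
    then show "(t 1 / t j)\<^sup>2 \<le> (t 1)\<^sup>2 * (1 / (a j)\<^sup>2)" by (simp add: power_divide)
  qed
  also have "\<dots> = (t 1)\<^sup>2 * (1 / (t 1)\<^sup>2 + (\<Sum>m\<in>{1..n - 1}. 1 / (t 1 + real m * u)\<^sup>2))"
    by (simp only: sum_distrib_left[symmetric] split)
  also have "\<dots> \<le> (t 1)\<^sup>2 * (1 / (t 1)\<^sup>2 + 1 / (t 1 * u))"
    using tel by (intro mult_left_mono add_left_mono) auto
  also have "\<dots> = 1 + t 1 / u" using t1p u by (simp add: field_simps power2_eq_square)
  also have "\<dots> \<le> 2 * G"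
  proof -
    have "t 1 / u \<le> 2 * G - 1" using t1 u by (simp add: divide_simps)
    then show ?thesis by simp
  qed
  finally show ?thesis .
qed

lemma inverse_dist_ratio_le_outer:
  assumes c: "spaced_angles t n u G" and ph: "0 \<le> phi" "phi < t 0" and j: "1 \<le> j" "j \<le> n"
  shows "(1 / (cos phi - cos (t j))) / (1 / (cos phi - cos (t 0)) - 1 / (cos phi - cos (t 1)))
           \<le> (1 - cos (t 0)) / (cos (t 0) - cos (t 1)) * (pi\<^sup>2 / 4 * (t 1 / t j)\<^sup>2)"
proof -
  have n: "3 \<le> n" using c unfolding spaced_angles_def by simp
  note rng = spaced_angles_range[OF c]
  have tj: "0 < t j" using spaced_angles_strict[OF c, of 0 j] rng[of 0] j by auto
  have z0: "cos (t 0) < cos phi" using rng[of 0] ph by (intro cos_monotone_0_pi) auto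
  have x10: "cos (t 1) < cos (t 0)"
    using strict_antimono_on_atMostD[OF spaced_angles_cos_antimono[OF c], of 0 1] n by simp
  have xj1: "cos (t j) \<le> cos (t 1)"
    using strict_antimono_on_atMost_leD[OF spaced_angles_cos_antimono[OF c], of 1 j] j by simp
  have xj: "cos (t j) < 1" using cos_monotone_0_pi[of 0 "t j"] tj rng[of j] j by simp
  define a where "a = cos phi - cos (t 0)"
  define b where "b = cos phi - cos (t 1)"
  define d where "d = cos phi - cos (t j)"
  have ab: "0 < a" "a < b" "b \<le> d" using z0 x10 xj1 by (auto simp: a_def b_def d_def)
  have "(1 / d) / (1 / a - 1 / b) = a / (b - a) * (b / d)" using ab by (simp add: field_simps)
  moreover have "a / (b - a) \<le> (1 - cos (t 0)) / (cos (t 0) - cos (t 1))"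
  proof -
    have "b - a = cos (t 0) - cos (t 1)" by (simp add: a_def b_def)
    moreover have "a \<le> 1 - cos (t 0)" by (simp add: a_def)
    ultimately show ?thesis using x10 by (simp add: divide_right_mono)
  qed
  moreover have "b / d \<le> (1 - cos (t 1)) / (1 - cos (t j))"
  proof -
    have "cos (t j) * (1 - cos phi) \<le> cos (t 1) * (1 - cos phi)"
      using xj1 by (intro mult_right_mono) auto
    then have "b * (1 - cos (t j)) \<le> (1 - cos (t 1)) * d" by (simp add: b_def d_def algebra_simps)
    then show ?thesis using ab xj by (simp add: divide_simps)
  qed
  moreover have "(1 - cos (t 1)) / (1 - cos (t j)) \<le> pi\<^sup>2 / 4 * (t 1 / t j)\<^sup>2"
  proof -
    have "(1 - cos (t 1)) / (1 - cos (t j)) \<le> ((t 1)\<^sup>2 / 2) / (2 * (t j)\<^sup>2 / pi\<^sup>2)"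
      using one_minus_cos_le[of "t 1"] one_minus_cos_ge[of "t j"] rng[of j] j tj x10 z0
      by (intro frac_le) auto
    also have "\<dots> = pi\<^sup>2 / 4 * (t 1 / t j)\<^sup>2" using tj by (simp add: field_simps power2_eq_square)
    finally show ?thesis .
  qed
  moreover have "0 \<le> a / (b - a)" "0 \<le> b / d" using ab by auto
  ultimately show ?thesis unfolding a_def b_def d_def[symmetric]
    by (smt (verit) mult_mono divide_nonneg_nonneg)
qed

lemma sum_inverse_dist_ratio_le_outer:
  assumes c: "spaced_angles t n u G" and ph: "0 \<le> phi" "phi < t 0"
  defines "v \<equiv> \<lambda>j. 1 / (cos phi - cos (t j))"
  shows "(\<Sum>j\<in>{1..n}. v j) / (v 0 - v 1) \<le> pi ^ 4 / 8 * G * (G - 1)\<^sup>2"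
proof -
  have G: "1 \<le> G" and n: "3 \<le> n" using c unfolding spaced_angles_def by auto
  define R where "R = (1 - cos (t 0)) / (cos (t 0) - cos (t 1))"
  have z0: "cos (t 0) < cos phi" using spaced_angles_range[OF c, of 0] ph by (intro cos_monotone_0_pi) auto
  have x10: "cos (t 1) < cos (t 0)"
    using strict_antimono_on_atMostD[OF spaced_angles_cos_antimono[OF c], of 0 1] n by simp
  have "(\<Sum>j\<in>{1..n}. v j) / (v 0 - v 1) = (\<Sum>j\<in>{1..n}. v j / (v 0 - v 1))"
    by (simp add: sum_divide_distrib)
  also have "\<dots> \<le> (\<Sum>j\<in>{1..n}. R * (pi\<^sup>2 / 4 * (t 1 / t j)\<^sup>2))"
    unfolding v_def R_def by (intro sum_mono inverse_dist_ratio_le_outer[OF c ph]) auto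
  also have "\<dots> = R * (pi\<^sup>2 / 4) * (\<Sum>j\<in>{1..n}. (t 1 / t j)\<^sup>2)"
    by (simp add: sum_distrib_left mult.assoc)
  also have "\<dots> \<le> R * (pi\<^sup>2 / 4) * (2 * G)"
    using spaced_angles_sum_ratio_sq_le[OF c] x10 z0 by (intro mult_left_mono) (auto simp: R_def)
  also have "\<dots> \<le> (pi\<^sup>2 / 4 * (G - 1)\<^sup>2) * (pi\<^sup>2 / 4) * (2 * G)"
    using spaced_angles_cos_gap_ratio_le[OF c] G by (intro mult_right_mono) (auto simp: R_def)
  also have "\<dots> = pi ^ 4 / 8 * G * (G - 1)\<^sup>2" by (simp add: power4_eq_xxxx power2_eq_square)
  finally show ?thesis .
qed

lemma lebesgue_fun_le_outer:
  assumes c: "spaced_angles t n u G" and ph: "0 \<le> phi" "phi < t 0"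
  shows "lebesgue_fun (\<lambda>i. cos (t i)) n (cos phi) \<le> 1 + pi ^ 4 / 4 * G * (G - 1)\<^sup>2"
proof -
  have n: "3 \<le> n" using c unfolding spaced_angles_def by auto
  note sd = spaced_angles_cos_antimono[OF c]
  define v where "v j = 1 / (cos phi - cos (t j))" for j
  define S where "S = (\<Sum>j\<in>{1..n}. v j)"
  have z0: "cos (t 0) < cos phi" using spaced_angles_range[OF c, of 0] ph by (intro cos_monotone_0_pi) auto
  have x_le: "cos (t i) \<le> cos (t 0)" if "i \<le> n" for i
    using strict_antimono_on_atMost_leD[OF sd, of 0 i] that by simp
  have x10: "cos (t 1) < cos (t 0)" using strict_antimono_on_atMostD[OF sd, of 0 1] n by simp
  have off: "\<not> (\<exists>i\<le>n. cos phi = cos (t i))" using x_le z0 by force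
  have v_nonneg: "0 \<le> v i" if "i \<le> n" for i using x_le[OF that] z0 by (simp add: v_def)
  have "v 0 - v 1 = (cos (t 0) - cos (t 1)) / ((cos phi - cos (t 0)) * (cos phi - cos (t 1)))"
    using z0 x10 by (simp add: v_def field_simps)
  then have vd: "0 < v 0 - v 1" using z0 x10 by (auto intro!: divide_pos_pos mult_pos_pos)
  have D: "v 0 - v 1 \<le> \<bar>berrut_den_sum (\<lambda>i. cos (t i)) n (cos phi)\<bar>"
    using abs_berrut_den_sum_ge_above[OF sd, of "cos phi"] z0 n by (simp add: v_def)
  have "inv_dist_sum (\<lambda>i. cos (t i)) n (cos phi) = (\<Sum>j\<le>n. v j)"
    unfolding inv_dist_sum_def v_def using x_le z0 by (intro sum.cong) force+
  also have "\<dots> = v 0 + S" by (simp add: S_def atLeast0AtMost[symmetric] sum.atLeast_Suc_atMost)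
  finally have inv: "inv_dist_sum (\<lambda>i. cos (t i)) n (cos phi) = v 0 + S" .
  have S: "v 1 \<le> S" unfolding S_def using n v_nonneg by (intro member_le_sum) auto
  have "lebesgue_fun (\<lambda>i. cos (t i)) n (cos phi) \<le> ((v 0 - v 1) + 2 * S) / (v 0 - v 1)"
    unfolding lebesgue_fun_off_nodes[OF off] inv
    using D vd S v_nonneg[of 1] n by (intro frac_le) auto
  also have "\<dots> = 1 + 2 * (S / (v 0 - v 1))" using vd by (simp add: field_simps)
  also have "S / (v 0 - v 1) \<le> pi ^ 4 / 8 * G * (G - 1)\<^sup>2"
    unfolding S_def v_def using sum_inverse_dist_ratio_le_outer[OF c ph] by simp
  finally show ?thesis by (simp add: mult.assoc mult.left_commute)
qed

definition lebesgue_bound :: "real \<Rightarrow> real \<Rightarrow> real" where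
  "lebesgue_bound G L = (G * (G + 2) * pi\<^sup>2 / 4 + 1) * (1 + pi\<^sup>2 * G * L)"

lemma lebesgue_bound_ge_one: "1 \<le> G \<Longrightarrow> 0 \<le> L \<Longrightarrow> 1 \<le> lebesgue_bound G L"
proof -
  assume a: "1 \<le> G" "0 \<le> L"
  have "1 \<le> G * (G + 2) * pi\<^sup>2 / 4 + 1" using a by simp
  moreover have "1 \<le> 1 + pi\<^sup>2 * G * L" using a by simp
  ultimately have "1 * 1 \<le> (G * (G + 2) * pi\<^sup>2 / 4 + 1) * (1 + pi\<^sup>2 * G * L)"
    by (intro mult_mono) auto
  then show ?thesis by (simp add: lebesgue_bound_def)
qed

lemma outer_bound_le_lebesgue_bound:
  assumes G: "1 \<le> G" and L: "1 \<le> L"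
  shows "1 + pi ^ 4 / 4 * G * (G - 1)\<^sup>2 \<le> lebesgue_bound G L"
proof -
  have P0: "0 \<le> G * (G + 2) * pi\<^sup>2 / 4" using G by simp
  have "lebesgue_bound G L = G * (G + 2) * pi\<^sup>2 / 4 * (1 + pi\<^sup>2 * G * L) + (1 + pi\<^sup>2 * G * L)"
    by (simp add: lebesgue_bound_def algebra_simps)
  moreover have "1 \<le> 1 + pi\<^sup>2 * G * L" using G L by simp
  moreover have "pi ^ 4 / 4 * G * (G - 1)\<^sup>2 \<le> G * (G + 2) * pi\<^sup>2 / 4 * (1 + pi\<^sup>2 * G * L)"
  proof -
    have "(G - 1)\<^sup>2 \<le> G * (G + 2) * 1" using G by (simp add: power2_eq_square algebra_simps)
    also have "\<dots> \<le> G * (G + 2) * L" using G L by (intro mult_left_mono) auto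
    finally have "(G - 1)\<^sup>2 \<le> G * (G + 2) * L" .
    hence "pi ^ 4 / 4 * G * (G - 1)\<^sup>2 \<le> pi ^ 4 / 4 * G * (G * (G + 2) * L)"
      using G by (intro mult_left_mono) auto
    also have "\<dots> \<le> pi ^ 4 / 4 * G * (G * (G + 2) * L) + G * (G + 2) * pi\<^sup>2 / 4"
      using P0 by simp
    also have "\<dots> = G * (G + 2) * pi\<^sup>2 / 4 * (1 + pi\<^sup>2 * G * L)"
      by (simp add: field_simps power2_eq_square power4_eq_xxxx)
    finally show ?thesis .
  qed
  ultimately show ?thesis by linarith
qed

lemma inner_bound_le_lebesgue_bound:
  assumes G: "1 \<le> G" and L: "1 \<le> L"
  shows "1 + pi * (3 * G * (G + 2)\<^sup>2 / 8) * (4 + 2 * L) \<le> lebesgue_bound G L"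
proof -
  have pi3: "3 \<le> pi" using pi_gt3 by simp
  have P0: "0 < G * (G + 2)" using G by simp
  have key: "3 * (G + 2) * (4 + 2 * L) \<le> 2 * pi * (1 + pi\<^sup>2 * G * L)"
  proof -
    have GL: "1 \<le> G * L" "G \<le> G * L" "L \<le> G * L"
      using mult_mono[of 1 G 1 L] mult_left_mono[of 1 L G] mult_right_mono[of 1 G L] G L by auto
    have "3 * (G + 2) * (4 + 2 * L) = 12 * G + 24 + 6 * (G * L) + 12 * L" by (simp add: algebra_simps)
    also have "\<dots> \<le> 6 + 54 * (G * L)" using GL by linarith
    also have "\<dots> \<le> 2 * pi * (1 + pi\<^sup>2 * G * L)"
    proof -
      have "9 \<le> pi\<^sup>2" using pi3 power_mono[of 3 pi 2] by simp
      hence "9 * (G * L) \<le> pi\<^sup>2 * (G * L)" using GL by (intro mult_right_mono) auto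
      hence "1 + 9 * (G * L) \<le> 1 + pi\<^sup>2 * G * L" by (simp add: mult.assoc)
      moreover have "0 \<le> 1 + 9 * (G * L)" using GL by simp
      ultimately have "3 * (1 + 9 * (G * L)) \<le> pi * (1 + pi\<^sup>2 * G * L)"
        using pi3 by (intro mult_mono) auto
      then show ?thesis by simp
    qed
    finally show ?thesis .
  qed
  have "pi * (3 * G * (G + 2)\<^sup>2 / 8) * (4 + 2 * L) = (G * (G + 2)) * (pi / 8 * (3 * (G + 2) * (4 + 2 * L)))"
    by (simp add: field_simps power2_eq_square)
  also have "\<dots> \<le> (G * (G + 2)) * (pi / 8 * (2 * pi * (1 + pi\<^sup>2 * G * L)))"
    using key P0 by (intro mult_left_mono) auto
  also have "\<dots> = G * (G + 2) * pi\<^sup>2 / 4 * (1 + pi\<^sup>2 * G * L)" by (simp add: field_simps power2_eq_square)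
  finally have a: "pi * (3 * G * (G + 2)\<^sup>2 / 8) * (4 + 2 * L) \<le> G * (G + 2) * pi\<^sup>2 / 4 * (1 + pi\<^sup>2 * G * L)" .
  have "lebesgue_bound G L = G * (G + 2) * pi\<^sup>2 / 4 * (1 + pi\<^sup>2 * G * L) + (1 + pi\<^sup>2 * G * L)"
    by (simp add: lebesgue_bound_def algebra_simps)
  moreover have "1 \<le> 1 + pi\<^sup>2 * G * L" using G L by simp
  ultimately show ?thesis using a by linarith
qed

lemma one_le_ln_of_nat: "3 \<le> n \<Longrightarrow> 1 \<le> ln (real n)"
proof -
  assume n: "3 \<le> n"
  have "exp 1 \<le> (3::real)" by (rule exp_le)
  also have "\<dots> \<le> real n" using n by simp
  finally show ?thesis using ln_ge_iff[of "real n" 1] n by simp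
qed

lemma harm_le_one_plus_ln: "1 \<le> m \<Longrightarrow> harm m \<le> 1 + ln (real m)"
proof -
  assume "1 \<le> m"
  then obtain j where j: "m = Suc j" by (cases m) auto
  have "harm (Suc j) - ln (real (Suc j)) \<le> harm (Suc 0) - ln (real (Suc 0))"
    using decseq_harm_diff_ln[unfolded decseq_def, rule_format, of 0 j] by simp
  then show ?thesis using j by (simp add: harm_Suc harm_def)
qed

lemma harm_le_one_plus_ln_mono: "m \<le> n \<Longrightarrow> 1 \<le> n \<Longrightarrow> harm m \<le> 1 + ln (real n)"
proof (cases "m = 0")
  case False
  assume "m \<le> n" "1 \<le> n"
  then have "ln (real m) \<le> ln (real n)" using False by simp
  then show ?thesis using harm_le_one_plus_ln[of m] False by simp
qed (simp add: harm_def)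

definition near_left_node :: "(nat \<Rightarrow> real) \<Rightarrow> nat \<Rightarrow> real \<Rightarrow> bool" where
  "near_left_node t n phi \<longleftrightarrow>
     phi < t 0 \<or> (\<exists>k<n. t k < phi \<and> phi < t (Suc k) \<and> phi - t k \<le> t (Suc k) - phi)"

lemma near_left_node_or_reflect:
  fixes t :: "nat \<Rightarrow> real"
  assumes ne: "\<And>i. i \<le> n \<Longrightarrow> phi \<noteq> t i"
  shows "near_left_node t n phi \<or> near_left_node (\<lambda>i. pi - t (n - i)) n (pi - phi)"
proof -
  have "phi \<noteq> t 0" "phi \<noteq> t n" using ne by auto
  then consider "phi < t 0" | "t n < phi" | "t 0 < phi" "phi < t n" by linarith
  then show ?thesis
  proof cases
    case 3
    obtain k where k: "k \<le> n" "- phi < - t k" "k < n \<Longrightarrow> - t (Suc k) < - phi"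
      using obtain_node_interval[of "- phi" "\<lambda>i. - t i" n] 3 ne by auto
    have kn: "k < n" using k(1,2) 3 by (cases "k = n") auto
    show ?thesis
    proof (cases "phi - t k \<le> t (Suc k) - phi")
      case True
      then show ?thesis using k kn unfolding near_left_node_def by auto
    next
      case False
      define k' where "k' = n - Suc k"
      have "k' < n" "n - k' = Suc k" "n - Suc k' = k" using kn by (auto simp: k'_def)
      then show ?thesis
        using False k kn unfolding near_left_node_def by (intro disjI2 exI[of _ k']) auto
    qed
  qed (auto simp: near_left_node_def)
qed

lemma lebesgue_fun_le_bound_near_left:
  assumes c: "spaced_angles t n u G" and ph: "0 \<le> phi" "near_left_node t n phi"
  shows "lebesgue_fun (\<lambda>i. cos (t i)) n (cos phi) \<le> lebesgue_bound G (ln (real n))"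
proof -
  have G: "1 \<le> G" and n: "3 \<le> n" using c unfolding spaced_angles_def by auto
  have L: "1 \<le> ln (real n)" using one_le_ln_of_nat[OF n] .
  consider "phi < t 0" | k where "k < n" "t k < phi" "phi < t (Suc k)" "phi - t k \<le> t (Suc k) - phi"
    using ph(2) unfolding near_left_node_def by blast
  then show ?thesis
  proof cases
    case 1
    then show ?thesis
      using lebesgue_fun_le_outer[OF c ph(1)] outer_bound_le_lebesgue_bound[OF G L] by fastforce
  next
    case 2
    have "2 + harm k + harm (n - Suc k) \<le> 4 + 2 * ln (real n)"
      using harm_le_one_plus_ln_mono[of k n] harm_le_one_plus_ln_mono[of "n - Suc k" n] 2 n by simp
    then have "1 + pi * (3 * G * (G + 2)\<^sup>2 / 8) * (2 + harm k + harm (n - Suc k))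
        \<le> 1 + pi * (3 * G * (G + 2)\<^sup>2 / 8) * (4 + 2 * ln (real n))"
      using G by (intro add_left_mono mult_left_mono) auto
    then show ?thesis
      using lebesgue_fun_le_inner[OF c 2] inner_bound_le_lebesgue_bound[OF G L] by linarith
  qed
qed

lemma lebesgue_fun_le_bound:
  assumes c: "spaced_angles t n u G" and z: "-1 \<le> z" "z \<le> 1"
  shows "lebesgue_fun (\<lambda>i. cos (t i)) n z \<le> lebesgue_bound G (ln (real n))"
proof (cases "\<exists>i\<le>n. z = cos (t i)")
  case True
  have G: "1 \<le> G" and n: "3 \<le> n" using c unfolding spaced_angles_def by auto
  then show ?thesis
    using True lebesgue_fun_at_node[OF spaced_angles_cos_antimono[OF c]] lebesgue_bound_ge_one[OF G]
    by fastforce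
next
  case False
  define phi where "phi = arccos z"
  define t' where "t' i = pi - t (n - i)" for i
  have phi: "0 \<le> phi" "phi \<le> pi" "cos phi = z" using arccos_bounded[OF z] z by (auto simp: phi_def)
  have c': "spaced_angles t' n u G" unfolding t'_def by (rule spaced_angles_reflect[OF c])
  have "lebesgue_fun (\<lambda>i. cos (t i)) n z = lebesgue_fun (\<lambda>i. cos (t' i)) n (cos (pi - phi))"
    using lebesgue_fun_reflect_nodes[of "\<lambda>i. cos (t i)" n z] phi
    by (simp add: reflect_nodes_cos t'_def[abs_def])
  moreover have "near_left_node t n phi \<or> near_left_node t' n (pi - phi)"
    using near_left_node_or_reflect[of n phi t] False phi unfolding t'_def[abs_def] by auto
  ultimately show ?thesis
    using lebesgue_fun_le_bound_near_left[OF c phi(1)] lebesgue_fun_le_bound_near_left[OF c', of "pi - phi"]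
      phi by auto
qed

lemma sorted_wrt_less_nth_imp_less:
  assumes "sorted_wrt (<) (xs :: nat list)" "i < length xs" "j < length xs" "xs ! i < xs ! j"
  shows "i < j"
  using sorted_wrt_nth_less[OF assms(1), of j i] assms
  by (cases "j < i") (auto simp: not_less_iff_gr_or_eq)

lemma card_le_if_disjoint:
  fixes F :: "nat set"
  assumes "F \<subseteq> {0..N}" "card F = N + 1 - s" "s \<le> N" "A \<subseteq> {0..N}" "A \<inter> F = {}"
  shows "card A \<le> s"
proof -
  have "A \<subseteq> {0..N} - F" using assms by blast
  moreover have "card ({0..N} - F) = s"
    using assms finite_subset[OF assms(1)] by (simp add: card_Diff_subset)
  ultimately show ?thesis by (metis card_mono finite_Diff finite_atLeastAtMost)
qed

lemma sorted_list_of_set_gaps: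
  fixes F :: "nat set"
  assumes F: "F \<subseteq> {0..N}" "card F = N + 1 - s" "s \<le> N"
  defines "xs \<equiv> sorted_list_of_set F"
  shows "length xs = N - s + 1" "xs ! 0 \<le> s" "xs ! (N - s) \<le> N" "N - xs ! (N - s) \<le> s"
    "\<And>i. i < N - s \<Longrightarrow> xs ! i < xs ! Suc i \<and> xs ! Suc i - xs ! i \<le> s + 1"
proof -
  have fin: "finite F" using F(1) finite_subset by blast
  show len: "length xs = N - s + 1" unfolding xs_def using F fin by simp
  have sorted: "sorted_wrt (<) xs" unfolding xs_def by simp
  have set: "set xs = F" unfolding xs_def using fin by simp
  have idx: "\<exists>j<length xs. xs ! j = y" if "y \<in> F" for y using that set by (metis in_set_conv_nth)
  have less_idx: "i < j" if "xs ! i < xs ! j" "i < length xs" "j < length xs" for i j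
    using sorted_wrt_less_nth_imp_less[OF sorted] that by blast
  note missing = card_le_if_disjoint[OF F]
  show "xs ! (N - s) \<le> N" using nth_mem[of "N - s" xs] set F(1) len by auto
  have "xs ! 0 \<le> N" using nth_mem[of 0 xs] set F(1) len by auto
  then have "{0..<xs ! 0} \<subseteq> {0..N}" by auto
  moreover have "{0..<xs ! 0} \<inter> F = {}" using idx less_idx len by fastforce
  ultimately show "xs ! 0 \<le> s" using missing[of "{0..<xs ! 0}"] by simp
  have "{Suc (xs ! (N - s))..N} \<inter> F = {}"
  proof -
    have False if y: "y \<in> F" "xs ! (N - s) < y" for y
    proof -
      obtain j where j: "j < length xs" "xs ! j = y" using idx[OF y(1)] by blast
      then have "N - s < j" using less_idx[of "N - s" j] y len by auto
      then show False using j len by simp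
    qed
    then show ?thesis by fastforce
  qed
  then show "N - xs ! (N - s) \<le> s" using missing[of "{Suc (xs ! (N - s))..N}"] by auto
  fix i assume i: "i < N - s"
  have lt: "xs ! i < xs ! Suc i" using sorted_wrt_nth_less[OF sorted, of i "Suc i"] i len by simp
  have "xs ! Suc i \<le> N" using nth_mem[of "Suc i" xs] set F(1) len i by auto
  then have "{Suc (xs ! i)..<xs ! Suc i} \<subseteq> {0..N}" by auto
  moreover have "{Suc (xs ! i)..<xs ! Suc i} \<inter> F = {}"
  proof -
    have False if y: "y \<in> F" "xs ! i < y" "y < xs ! Suc i" for y
    proof -
      obtain j where j: "j < length xs" "xs ! j = y" using idx[OF y(1)] by blast
      then have "i < j" "j < Suc i" using less_idx[of i j] less_idx[of j "Suc i"] y i len by auto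
      then show False by simp
    qed
    then show ?thesis by fastforce
  qed
  ultimately show "xs ! i < xs ! Suc i \<and> xs ! Suc i - xs ! i \<le> s + 1"
    using missing[of "{Suc (xs ! i)..<xs ! Suc i}"] lt by auto
qed

lemma chebyshev_subset_spaced_angles:
  assumes sN: "s + 2 < N" and F: "F \<subseteq> {0..N}" "card F = N + 1 - s"
  shows "spaced_angles (\<lambda>i. real (sorted_list_of_set F ! i) * pi / real N) (N - s) (pi / real N)
           (real (s + 1))"
proof -
  define xs where "xs = sorted_list_of_set F"
  define u where "u = pi / real N"
  have "s \<le> N" using sN by simp
  note gaps = sorted_list_of_set_gaps[OF F this, folded xs_def]
  have u: "0 < u" "real N * u = pi" using sN by (auto simp: u_def)
  have t: "(\<lambda>i. real (sorted_list_of_set F ! i) * pi / real N) = (\<lambda>i. real (xs ! i) * u)"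
    by (simp add: xs_def u_def)
  show ?thesis unfolding t u_def[symmetric] spaced_angles_def
  proof (intro conjI allI impI)
    show "real (s + 1) * u < pi"
      using mult_strict_right_mono[of "real (s + 1)" "real N" u] sN u by simp
    show "real (xs ! (N - s)) * u \<le> pi"
      using mult_right_mono[of "real (xs ! (N - s))" "real N" u] gaps(3) u by simp
    show "real (xs ! 0) * u \<le> (real (s + 1) - 1) * u"
      using mult_right_mono[of "real (xs ! 0)" "real s" u] gaps(2) u by simp
    have "real N \<le> real (xs ! (N - s)) + real s" using gaps(4) by linarith
    then show "pi - real (xs ! (N - s)) * u \<le> (real (s + 1) - 1) * u"
      using mult_right_mono[of "real N" "real (xs ! (N - s)) + real s" u] u
      by (simp add: algebra_simps)
    fix i assume i: "i < N - s"
    have d: "real (xs ! Suc i) * u - real (xs ! i) * u = real (xs ! Suc i - xs ! i) * u"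
      using gaps(5)[OF i] by (simp add: of_nat_diff algebra_simps)
    have "1 * u \<le> real (xs ! Suc i - xs ! i) * u"
      using gaps(5)[OF i] u by (intro mult_right_mono) auto
    then show "u \<le> real (xs ! Suc i) * u - real (xs ! i) * u" using d by simp
    have "real (xs ! Suc i - xs ! i) * u \<le> real (s + 1) * u"
      using gaps(5)[OF i] u by (intro mult_right_mono) auto
    then show "real (xs ! Suc i) * u - real (xs ! i) * u \<le> real (s + 1) * u" using d by simp
  qed (use sN u in auto)
qed

lemma obtain_min_gap:
  fixes x :: "nat \<Rightarrow> real"
  assumes "strict_antimono_on {..n} x"
  obtains h where "0 < h" "h \<le> 2" "\<And>i. i < n \<Longrightarrow> h \<le> x i - x (Suc i)"
proof (cases "n = 0")
  case False
  define M where "M = Min ((\<lambda>i. x i - x (Suc i)) ` {..<n})"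
  have "0 < M"
    unfolding M_def using False strict_antimono_on_atMostD[OF assms] by (subst Min_gr_iff) auto
  moreover have "M \<le> x i - x (Suc i)" if "i < n" for i unfolding M_def using that by (intro Min_le) auto
  ultimately show ?thesis using that[of "min 2 M"] by (auto intro: min.coboundedI2)
qed (use that[of 2] in auto)

lemma berrut_bounded:
  assumes sd: "strict_antimono_on {..n} x" and rng: "\<And>i. i \<le> n \<Longrightarrow> \<bar>x i\<bar> \<le> 1"
  shows "bounded (berrut x n y ` {-1..1})"
proof -
  obtain h where h: "0 < h" "h \<le> 2" "\<And>i. i < n \<Longrightarrow> h \<le> x i - x (Suc i)"
    using obtain_min_gap[OF sd] by blast
  have "\<bar>berrut x n y z\<bar> \<le> 2 * (real n + 1) / h * (\<Sum>i\<le>n. \<bar>y i\<bar>)" if "z \<in> {-1..1}" for z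
  proof (rule order_trans[OF abs_berrut_le])
    show "lebesgue_fun x n z * (\<Sum>i\<le>n. \<bar>y i\<bar>) \<le> 2 * (real n + 1) / h * (\<Sum>i\<le>n. \<bar>y i\<bar>)"
      using lebesgue_fun_le_min_gap[OF sd rng h, of z] that by (intro mult_right_mono sum_nonneg) auto
  qed
  then show ?thesis
    unfolding bounded_iff by (intro exI[of _ "2 * (real n + 1) / h * (\<Sum>i\<le>n. \<bar>y i\<bar>)"]) auto
qed

lemma bounded_continuous_comp:
  fixes f :: "'a :: heine_borel \<Rightarrow> 'b :: metric_space"
  assumes "continuous_on UNIV f" "bounded (u ` S)"
  shows "bounded ((\<lambda>z. f (u z)) ` S)"
proof -
  have "compact (f ` closure (u ` S))"
    using assms by (intro compact_continuous_image continuous_on_subset[OF assms(1)])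
      (auto simp: compact_closure)
  then have "bounded (f ` closure (u ` S))" by (rule compact_imp_bounded)
  then show ?thesis by (rule bounded_subset) (auto intro: closure_subset[THEN subsetD])
qed

lemma chebyshev_roots_antimono:
  assumes "1 \<le> K"
  shows "strict_antimono_on {..K - 1} (\<lambda>i. cos ((2 * real i + 1) * pi / (2 * real K)))"
proof (rule monotone_onI)
  fix i j :: nat assume ij: "i \<in> {..K - 1}" "j \<in> {..K - 1}" "i < j"
  have "(2 * real j + 1) * pi \<le> (2 * real K) * pi" using ij assms by (intro mult_right_mono) auto
  then show "cos ((2 * real j + 1) * pi / (2 * real K)) < cos ((2 * real i + 1) * pi / (2 * real K))"
    using ij assms by (intro cos_monotone_0_pi divide_strict_right_mono mult_strict_right_mono)
      (auto simp: divide_simps)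
qed

lemma lebesgue_const_le:
  assumes "\<And>z. z \<in> {-1..1} \<Longrightarrow> lebesgue_fun x n z \<le> B"
  shows "0 \<le> lebesgue_const x n" "lebesgue_const x n \<le> B"
proof -
  have bdd: "bdd_above (lebesgue_fun x n ` {-1..1})" using assms by (intro bdd_aboveI2) auto
  have "lebesgue_fun x n 0 \<le> lebesgue_const x n"
    unfolding lebesgue_const_eq_Sup_lebesgue_fun by (rule cSup_upper[OF _ bdd]) auto
  then show "0 \<le> lebesgue_const x n" using lebesgue_fun_nonneg[of x n 0] by linarith
  show "lebesgue_const x n \<le> B"
    unfolding lebesgue_const_eq_Sup_lebesgue_fun using assms by (intro cSup_least) auto
qed

lemma sup_abs_berrut_error_nonneg:
  assumes "\<And>z. z \<in> {-1..1} \<Longrightarrow> lebesgue_fun x n z \<le> B" and "bounded (g ` {-1..1})"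
  shows "0 \<le> Sup ((\<lambda>z. \<bar>g z - berrut x n (\<lambda>i. g (x i)) z\<bar>) ` {-1..1})"
proof -
  obtain M where M: "\<forall>z\<in>{-1..1}. \<bar>g z\<bar> \<le> M"
    using assms(2) by (auto simp: bounded_iff)
  have "\<bar>g z - berrut x n (\<lambda>i. g (x i)) z\<bar> \<le> M + B * (\<Sum>i\<le>n. \<bar>g (x i)\<bar>)" if "z \<in> {-1..1}" for z
  proof -
    have "\<bar>berrut x n (\<lambda>i. g (x i)) z\<bar> \<le> B * (\<Sum>i\<le>n. \<bar>g (x i)\<bar>)"
      using assms(1)[OF that]
      by (intro order_trans[OF abs_berrut_le] mult_right_mono sum_nonneg) auto
    then show ?thesis using M that by fastforce
  qed
  then have "bdd_above ((\<lambda>z. \<bar>g z - berrut x n (\<lambda>i. g (x i)) z\<bar>) ` {-1..1})"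
    by (intro bdd_aboveI2) auto
  from cSup_upper[OF _ this, of "\<bar>g 0 - berrut x n (\<lambda>i. g (x i)) 0\<bar>"] show ?thesis by force
qed

theorem corollary1:
  fixes K N s :: nat and X :: "nat \<Rightarrow> real" and f :: "real \<Rightarrow> real" and F :: "nat set"
  assumes "K \<ge> 1" and "s + 2 < N"
    and "continuous_on UNIV f"
    and "F \<subseteq> {0..N}" and "card F = N + 1 - s"
  defines "g \<equiv> (\<lambda>z. f (berrut (\<lambda>i. cos ((2 * real i + 1) * pi / (2 * real K))) (K - 1) X z))"
    and "zs \<equiv> (\<lambda>i. cos (real (sorted_list_of_set F ! i) * pi / real N))"
  defines "Q \<equiv> {r :: real \<Rightarrow> real. \<exists>p :: real poly. degree p \<le> N - s
              \<and> (\<forall>z. r z = poly p z / berrut_denom zs (N - s) z)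
              \<and> (\<forall>j\<le>N - s. r (zs j) = g (zs j))}"
  shows "Sup ((\<lambda>z. \<bar>berrut zs (N - s) (\<lambda>i. g (zs i)) z - g z\<bar>) ` {-1..1})
           \<le> (1 + lebesgue_const zs (N - s)) * (INF r\<in>Q. Sup ((\<lambda>z. \<bar>g z - r z\<bar>) ` {-1..1}))
         \<and> lebesgue_const zs (N - s)
           \<le> ((real (s + 1) * real (s + 3) * pi ^ 2 / 4 + 1)
               * (1 + pi ^ 2 * real (s + 1) * ln (real N - real s)))"
proof -
  define n where "n = N - s"
  define B where "B = lebesgue_bound (real (s + 1)) (ln (real n))"
  note c = chebyshev_subset_spaced_angles[OF assms(2,4,5)]
  have lam: "\<And>z. z \<in> {-1..1} \<Longrightarrow> lebesgue_fun zs n z \<le> B"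
    unfolding zs_def B_def n_def using lebesgue_fun_le_bound[OF c] by auto
  have B: "B = (real (s + 1) * real (s + 3) * pi ^ 2 / 4 + 1)
               * (1 + pi ^ 2 * real (s + 1) * ln (real N - real s))"
    using assms(2) by (simp add: B_def lebesgue_bound_def n_def of_nat_diff)
  have "bounded (g ` {-1..1})"
    unfolding g_def using assms(1) chebyshev_roots_antimono
    by (intro bounded_continuous_comp[OF assms(3)] berrut_bounded) auto
  then have E: "0 \<le> Sup ((\<lambda>z. \<bar>g z - berrut zs n (\<lambda>i. g (zs i)) z\<bar>) ` {-1..1})"
    using sup_abs_berrut_error_nonneg[OF lam] by auto
  have "Q = {berrut zs n (\<lambda>i. g (zs i))}"
    unfolding Q_def n_def zs_def
    by (rule berrut_unique_rational_interpolant[OF spaced_angles_cos_antimono[OF c]])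
  then show ?thesis
    using lebesgue_const_le[OF lam] E B unfolding n_def
    by (simp add: abs_minus_commute mult_le_cancel_right1)
qed

end
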